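(* Let $\mathfrak g$ be a real nilpotent Lie algebra with a metric $\langle,\rangle_{\mathfrak g}$ satisfying $\operatorname{Ric}=\lambda\,\mathrm{id}+D$ with $\lambda\neq0$ and $D\in\operatorname{Der}\mathfrak g$. Let $\mathfrak a\subset\operatorname{Der}\mathfrak g$ be a Lie subalgebra consisting of derivations that are self-adjoint with respect to $\langle,\rangle_{\mathfrak g}$, with $D\in\mathfrak a$, and assume that the bilinear form $\langle X,Y\rangle_{\mathrm{Tr}}=\operatorname{Tr}(X\circ Y)$ is nondegenerate on $\mathfrak a$. Let $\tilde{\mathfrak g}=\mathfrak g\rtimes\mathfrak a$ be the semidirect product with $[X,v]=X(v)$ for $X\in\mathfrak a$, $v\in\mathfrak g$, and endow it with the metric $\langle,\rangle_{\mathfrak g}-\frac1\lambda\langle,\rangle_{\mathrm{Tr}}$ (with $\mathfrak g\perp\mathfrak a$). Then this metric is Einstein with $\widetilde{\operatorname{Ric}}=\lambda\,\mathrm{id}$, and $\tilde{\mathfrak g}=\mathfrak g\oplus^\perp\mathfrak a$ is a pseudo-Iwasawa decomposition.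
   Context: A metric on a Lie algebra is a nondegenerate symmetric bilinear form, possibly indefinite; Ricci operators are those of the corresponding left-invariant pseudo-Riemannian metrics on simply connected Lie groups. A pseudo-Iwasawa decomposition of a metric Lie algebra $\tilde{\mathfrak g}$ is an orthogonal direct sum of vector spaces $\tilde{\mathfrak g}=\mathfrak g\oplus^\perp\mathfrak a$ with $\mathfrak g$ a nilpotent ideal, $\mathfrak a$ an abelian subalgebra, and $\operatorname{ad}X$ self-adjoint for every $X\in\mathfrak a$. *)

theory Defs
  imports "HOL-Analysis.Analysis"
begin

text \<open>A (real, finite-dimensional) Lie algebra is modelled as a linear subspace V of a
 Euclidean-space type together with a bracket defined on the ambient type.\<close>

definition lie_algebra :: "'v::euclidean_space set \<Rightarrow> ('v \<Rightarrow> 'v \<Rightarrow> 'v) \<Rightarrow> bool" where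
  "lie_algebra V br \<longleftrightarrow> subspace V \<and> bilinear br \<and>
     (\<forall>x\<in>V. \<forall>y\<in>V. br x y \<in> V) \<and>
     (\<forall>x\<in>V. br x x = 0) \<and>
     (\<forall>x\<in>V. \<forall>y\<in>V. \<forall>z\<in>V. br x (br y z) + br y (br z x) + br z (br x y) = 0)"

fun lower_central :: "'v::euclidean_space set \<Rightarrow> ('v \<Rightarrow> 'v \<Rightarrow> 'v) \<Rightarrow> nat \<Rightarrow> 'v set" where
  "lower_central V br 0 = V"
| "lower_central V br (Suc k) = span {br x y | x y. x \<in> V \<and> y \<in> lower_central V br k}"

definition nilpotent_lie :: "'v::euclidean_space set \<Rightarrow> ('v \<Rightarrow> 'v \<Rightarrow> 'v) \<Rightarrow> bool" where
  "nilpotent_lie V br \<longleftrightarrow> (\<exists>k. lower_central V br k = {0})"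

text \<open>A metric: nondegenerate symmetric bilinear form (possibly indefinite) on V.\<close>
definition lie_metric :: "'v::euclidean_space set \<Rightarrow> ('v \<Rightarrow> 'v \<Rightarrow> real) \<Rightarrow> bool" where
  "lie_metric V B \<longleftrightarrow> bilinear B \<and> (\<forall>x\<in>V. \<forall>y\<in>V. B x y = B y x) \<and>
     (\<forall>x\<in>V. (\<forall>y\<in>V. B x y = 0) \<longrightarrow> x = 0)"

definition basis_of :: "'v::euclidean_space set \<Rightarrow> 'v set" where
  "basis_of V = (SOME S. S \<subseteq> V \<and> independent S \<and> span S = V)"

definition trace_on :: "'v::euclidean_space set \<Rightarrow> ('v \<Rightarrow> 'v) \<Rightarrow> real" where
  "trace_on V f = (\<Sum>b\<in>basis_of V. real_vector.representation (basis_of V) (f b) b)"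

text \<open>Levi-Civita connection of the left-invariant metric (Koszul formula).\<close>
definition levi_civita :: "'v::euclidean_space set \<Rightarrow> ('v \<Rightarrow> 'v \<Rightarrow> 'v) \<Rightarrow> ('v \<Rightarrow> 'v \<Rightarrow> real)
    \<Rightarrow> 'v \<Rightarrow> 'v \<Rightarrow> 'v" where
  "levi_civita V br B X Y = (THE W. W \<in> V \<and>
     (\<forall>Z\<in>V. B W Z = (B (br X Y) Z - B (br Y Z) X + B (br Z X) Y) / 2))"

definition curvature :: "'v::euclidean_space set \<Rightarrow> ('v \<Rightarrow> 'v \<Rightarrow> 'v) \<Rightarrow> ('v \<Rightarrow> 'v \<Rightarrow> real)
    \<Rightarrow> 'v \<Rightarrow> 'v \<Rightarrow> 'v \<Rightarrow> 'v" where
  "curvature V br B X Y Z =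
     levi_civita V br B X (levi_civita V br B Y Z) - levi_civita V br B Y (levi_civita V br B X Z)
     - levi_civita V br B (br X Y) Z"

definition ricci_form :: "'v::euclidean_space set \<Rightarrow> ('v \<Rightarrow> 'v \<Rightarrow> 'v) \<Rightarrow> ('v \<Rightarrow> 'v \<Rightarrow> real)
    \<Rightarrow> 'v \<Rightarrow> 'v \<Rightarrow> real" where
  "ricci_form V br B Y Z = trace_on V (\<lambda>X. curvature V br B X Y Z)"

definition ricci_op :: "'v::euclidean_space set \<Rightarrow> ('v \<Rightarrow> 'v \<Rightarrow> 'v) \<Rightarrow> ('v \<Rightarrow> 'v \<Rightarrow> real)
    \<Rightarrow> 'v \<Rightarrow> 'v" where
  "ricci_op V br B Y = (THE W. W \<in> V \<and> (\<forall>Z\<in>V. B W Z = ricci_form V br B Y Z))"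

definition pseudo_iwasawa :: "'v::euclidean_space set \<Rightarrow> ('v \<Rightarrow> 'v \<Rightarrow> 'v) \<Rightarrow> ('v \<Rightarrow> 'v \<Rightarrow> real)
    \<Rightarrow> 'v set \<Rightarrow> 'v set \<Rightarrow> bool" where
  "pseudo_iwasawa V br B G Aa \<longleftrightarrow>
     subspace G \<and> subspace Aa \<and> G \<subseteq> V \<and> Aa \<subseteq> V \<and>
     G \<inter> Aa = {0} \<and> {x + y | x y. x \<in> G \<and> y \<in> Aa} = V \<and>
     (\<forall>x\<in>G. \<forall>y\<in>Aa. B x y = 0) \<and>
     (\<forall>x\<in>V. \<forall>y\<in>G. br x y \<in> G) \<and> nilpotent_lie G br \<and>
     (\<forall>x\<in>Aa. \<forall>y\<in>Aa. br x y = 0) \<and>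
     (\<forall>X\<in>Aa. \<forall>u\<in>V. \<forall>w\<in>V. B (br X u) w = B u (br X w))"

definition is_derivation :: "(real^'n \<Rightarrow> real^'n \<Rightarrow> real^'n) \<Rightarrow> real^'n^'n \<Rightarrow> bool" where
  "is_derivation br M \<longleftrightarrow> (\<forall>x y. M *v br x y = br (M *v x) y + br x (M *v y))"

definition self_adjoint_wrt :: "(real^'n \<Rightarrow> real^'n \<Rightarrow> real) \<Rightarrow> real^'n^'n \<Rightarrow> bool" where
  "self_adjoint_wrt B M \<longleftrightarrow> (\<forall>x y. B (M *v x) y = B x (M *v y))"

definition sd_bracket :: "(real^'n \<Rightarrow> real^'n \<Rightarrow> real^'n) \<Rightarrow>
    ((real^'n) \<times> (real^'n^'n)) \<Rightarrow> ((real^'n) \<times> (real^'n^'n)) \<Rightarrow> ((real^'n) \<times> (real^'n^'n))" where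
  "sd_bracket br p q = (br (fst p) (fst q) + snd p *v fst q - snd q *v fst p,
                        snd p ** snd q - snd q ** snd p)"

definition sd_metric :: "(real^'n \<Rightarrow> real^'n \<Rightarrow> real) \<Rightarrow> real \<Rightarrow>
    ((real^'n) \<times> (real^'n^'n)) \<Rightarrow> ((real^'n) \<times> (real^'n^'n)) \<Rightarrow> real" where
  "sd_metric B lam p q = B (fst p) (fst q) - (1 / lam) * trace (snd p ** snd q)"

end

theory Submission
  imports Defs
begin

(* Self-adjoint commutators of self-adjoint maps vanish, so A is abelian, and the Koszul
   formula gives the Levi-Civita connection of the extension explicitly:
   \<nabla>~(u,X) (v,Y) = (\<nabla>u v - Y u, \<sigma>(u,v)), where \<sigma>(u,v) \<in> A represents
   Z \<mapsto> <Z u, v> with respect to -1/\<lambda> tr. The Ricci form is the trace of the curvature, taken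
   blockwise on g \<oplus> A. On the g-block, nilpotency (maps lowering the central series are
   traceless) and self-adjointness kill every covariant-derivative term, leaving
   ric(v,w) - tr \<sigma>(v,w) - tr(Z Y) plus a cross term that cancels against the A-block.
   Finally tr \<sigma>(v,w) = <D v, w>: the Ricci operator of a nilpotent metric Lie algebra is
   trace-orthogonal to derivations, so \<lambda> tr S + tr(D S) = 0 for every derivation S.
   Hence ric~((v,Y),(w,Z)) = \<lambda><v,w> - tr(Y Z) = \<lambda> <(v,Y),(w,Z)>~. *)

section \<open>Traces of linear maps on subspaces\<close>

definition linear_on :: "'a::real_vector set \<Rightarrow> ('a \<Rightarrow> 'b::real_vector) \<Rightarrow> bool" where
  "linear_on V f \<longleftrightarrow>
     (\<forall>x\<in>V. \<forall>y\<in>V. f (x + y) = f x + f y) \<and> (\<forall>c. \<forall>x\<in>V. f (c *\<^sub>R x) = c *\<^sub>R f x)"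

lemma linear_imp_linear_on: "linear f \<Longrightarrow> linear_on V f"
  by (simp add: linear_on_def linear_add linear_scale)

lemma linear_on_subset: "linear_on V f \<Longrightarrow> W \<subseteq> V \<Longrightarrow> linear_on W f"
  unfolding linear_on_def by blast

lemma linear_on_representation:
  assumes "independent S" "span S = V"
  shows "linear_on V (\<lambda>x. real_vector.representation S x b)"
  using assms unfolding linear_on_def
  by (simp add: real_vector.representation_add real_vector.representation_scale)

lemma linear_on_sum:
  assumes "subspace V" "linear_on V f" "\<And>i. i \<in> I \<Longrightarrow> x i \<in> V"
  shows "f (\<Sum>i\<in>I. a i *\<^sub>R x i) = (\<Sum>i\<in>I. a i *\<^sub>R f (x i))"
  using assms(3)
proof (induction I rule: infinite_finite_induct)
  case (infinite I)
  then show ?case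
    using assms(1,2) unfolding linear_on_def by (metis scale_zero_left subspace_0 sum.infinite)
next
  case empty
  then show ?case
    using assms(1,2) unfolding linear_on_def by (metis scale_zero_left subspace_0 sum.empty)
next
  case (insert y F)
  have "(\<Sum>i\<in>F. a i *\<^sub>R x i) \<in> V" "a y *\<^sub>R x y \<in> V"
    using insert assms(1) by (auto intro!: subspace_sum subspace_scale)
  then show ?case using insert assms(2) unfolding linear_on_def by simp
qed

lemma
  assumes "subspace V"
  shows basis_of_subset: "basis_of V \<subseteq> V"
    and independent_basis_of: "independent (basis_of V)"
    and span_basis_of: "span (basis_of V) = V"
    and finite_basis_of: "finite (basis_of V)"
proof -
  obtain S where S: "S \<subseteq> V" "independent S" "V \<subseteq> span S"
    using basis_exists[of V] by metis
  then have "span S = V" using assms by (simp add: span_minimal subset_antisym)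
  then have "\<exists>S. S \<subseteq> V \<and> independent S \<and> span S = V" using S by blast
  then have "basis_of V \<subseteq> V \<and> independent (basis_of V) \<and> span (basis_of V) = V"
    unfolding basis_of_def by (rule someI_ex)
  then show "basis_of V \<subseteq> V" "independent (basis_of V)" "span (basis_of V) = V"
    by auto
  then show "finite (basis_of V)" using independent_imp_finite by blast
qed

lemma trace_on_cong:
  "subspace V \<Longrightarrow> (\<And>x. x \<in> V \<Longrightarrow> f x = g x) \<Longrightarrow> trace_on V f = trace_on V g"
  unfolding trace_on_def using basis_of_subset by (metis (no_types, lifting) subsetD sum.cong)

text \<open>The family \<open>c\<close> need not be independent.\<close>

lemma trace_on_frame:
  assumes V: "subspace V" and f: "linear_on V f" "\<And>x. x \<in> V \<Longrightarrow> f x \<in> V"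
    and I: "finite I" and c: "\<And>i. i \<in> I \<Longrightarrow> c i \<in> V"
    and \<phi>: "\<And>i. i \<in> I \<Longrightarrow> linear_on V (\<phi> i)"
    and expansion: "\<And>x. x \<in> V \<Longrightarrow> x = (\<Sum>i\<in>I. \<phi> i x *\<^sub>R c i)"
  shows "trace_on V f = (\<Sum>i\<in>I. \<phi> i (f (c i)))"
proof -
  let ?S = "basis_of V"
  let ?R = "real_vector.representation ?S"
  have S: "?S \<subseteq> V" "independent ?S" "span ?S = V" "finite ?S"
    using V by (rule basis_of_subset independent_basis_of span_basis_of finite_basis_of)+
  have fc: "f (c i) \<in> span ?S" if "i \<in> I" for i using S c f that by auto
  have coord: "?R (f b) b = (\<Sum>i\<in>I. \<phi> i b * ?R (f (c i)) b)" if "b \<in> ?S" for b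
  proof -
    have "f b = (\<Sum>i\<in>I. \<phi> i b *\<^sub>R f (c i))"
      using linear_on_sum[OF V f(1), of I c "\<lambda>i. \<phi> i b"] expansion[of b] c S that by auto
    then have "?R (f b) = (\<lambda>b'. \<Sum>i\<in>I. ?R (\<phi> i b *\<^sub>R f (c i)) b')"
      using S fc by (auto intro!: real_vector.representation_sum span_scale)
    then show ?thesis
      using S fc by (simp add: real_vector.representation_scale)
  qed
  have "trace_on V f = (\<Sum>b\<in>?S. \<Sum>i\<in>I. \<phi> i b * ?R (f (c i)) b)"
    by (simp add: trace_on_def coord)
  also have "\<dots> = (\<Sum>i\<in>I. \<Sum>b\<in>?S. ?R (f (c i)) b *\<^sub>R \<phi> i b)"
    by (subst sum.swap) (simp add: mult.commute)
  also have "\<dots> = (\<Sum>i\<in>I. \<phi> i (\<Sum>b\<in>?S. ?R (f (c i)) b *\<^sub>R b))"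
  proof (intro sum.cong refl)
    fix i assume "i \<in> I"
    then show "(\<Sum>b\<in>?S. ?R (f (c i)) b *\<^sub>R \<phi> i b) = \<phi> i (\<Sum>b\<in>?S. ?R (f (c i)) b *\<^sub>R b)"
      using linear_on_sum[OF V \<phi>, of i ?S "\<lambda>b. b" "?R (f (c i))"] S(1) by (auto simp: subset_iff)
  qed
  also have "\<dots> = (\<Sum>i\<in>I. \<phi> i (f (c i)))"
    using S fc by (intro sum.cong refl) (simp add: real_vector.sum_representation_eq)
  finally show ?thesis .
qed

lemma trace_on_frame_Plus:
  assumes V: "subspace V" and f: "linear_on V f" "\<And>x. x \<in> V \<Longrightarrow> f x \<in> V"
    and I: "finite I" and J: "finite J"
    and c: "\<And>i. i \<in> I \<Longrightarrow> c i \<in> V" and d: "\<And>j. j \<in> J \<Longrightarrow> d j \<in> V"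
    and \<phi>: "\<And>i. i \<in> I \<Longrightarrow> linear_on V (\<phi> i)"
    and \<psi>: "\<And>j. j \<in> J \<Longrightarrow> linear_on V (\<psi> j)"
    and expansion: "\<And>x. x \<in> V \<Longrightarrow> x = (\<Sum>i\<in>I. \<phi> i x *\<^sub>R c i) + (\<Sum>j\<in>J. \<psi> j x *\<^sub>R d j)"
  shows "trace_on V f = (\<Sum>i\<in>I. \<phi> i (f (c i))) + (\<Sum>j\<in>J. \<psi> j (f (d j)))"
proof -
  have "trace_on V f = (\<Sum>k\<in>I <+> J. case_sum \<phi> \<psi> k (f (case_sum c d k)))"
  proof (rule trace_on_frame[OF V f])
    show "x = (\<Sum>k\<in>I <+> J. case_sum \<phi> \<psi> k x *\<^sub>R case_sum c d k)" if "x \<in> V" for x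
      using expansion[OF that] by (simp add: sum.Plus[OF I J] o_def)
  qed (use I J c d \<phi> \<psi> in auto)
  then show ?thesis by (simp add: sum.Plus[OF I J] o_def)
qed

lemma trace_on_basis:
  assumes V: "subspace V" and f: "linear_on V f" "\<And>x. x \<in> V \<Longrightarrow> f x \<in> V"
    and S: "independent S" "span S = V"
  shows "trace_on V f = (\<Sum>b\<in>S. real_vector.representation S (f b) b)"
proof (rule trace_on_frame[OF V f])
  show "finite S" using S independent_imp_finite by blast
  then show "x = (\<Sum>b\<in>S. real_vector.representation S x b *\<^sub>R b)" if "x \<in> V" for x
    using real_vector.sum_representation_eq[of S x S] S that by simp
qed (use S linear_on_representation[OF S] in \<open>auto intro: span_base\<close>)

lemma trace_on_restrict:
  assumes V: "subspace V" and W: "subspace W" "W \<subseteq> V"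
    and f: "linear_on V f" "\<And>x. x \<in> V \<Longrightarrow> f x \<in> W"
  shows "trace_on V f = trace_on W f"
proof -
  let ?SW = "basis_of W"
  let ?R = real_vector.representation
  have SW: "?SW \<subseteq> W" "independent ?SW" "span ?SW = W"
    using W(1) by (rule basis_of_subset independent_basis_of span_basis_of)+
  obtain S where S: "?SW \<subseteq> S" "S \<subseteq> V" "independent S" "V \<subseteq> span S"
    using maximal_independent_subset_extend[of ?SW V] SW W(2) by blast
  have "span S = V" using S V by (simp add: span_minimal subset_antisym)
  then have "trace_on V f = (\<Sum>b\<in>S. ?R S (f b) b)"
    using trace_on_basis[OF V f(1) _ S(3)] f(2) W(2) by blast
  also have "\<dots> = (\<Sum>b\<in>S. ?R ?SW (f b) b)"
    using real_vector.representation_extend[OF S(3) _ S(1)] f(2) S(2) SW(3)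
    by (intro sum.cong) auto
  also have "\<dots> = (\<Sum>b\<in>?SW. ?R ?SW (f b) b)"
    using S(1) independent_imp_finite[OF S(3)] real_vector.representation_ne_zero
    by (intro sum.mono_neutral_right) auto
  finally show ?thesis by (simp add: trace_on_def)
qed

lemma trace_on_zero_space: "trace_on {0::'a::euclidean_space} f = 0"
proof -
  have "subspace {0::'a}" by (rule subspace_single_0)
  then have "basis_of {0::'a} \<subseteq> {0}" "0 \<notin> basis_of {0::'a}"
    using basis_of_subset independent_basis_of real_vector.dependent_zero by blast+
  then have "basis_of {0::'a} = {}" by blast
  then show ?thesis by (simp add: trace_on_def)
qed

text \<open>The trace does not change under restriction to each step of the flag, and it vanishes
  on the last one.\<close>

lemma trace_on_flag_lowering:
  assumes sub: "\<And>k. subspace (C k)" and dec: "\<And>k. C (Suc k) \<subseteq> C k"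
    and C0: "C 0 = V" and Cm: "C m = {0}"
    and f: "linear_on V f" "\<And>k x. x \<in> C k \<Longrightarrow> f x \<in> C (Suc k)"
  shows "trace_on V f = 0"
proof -
  have CV: "C k \<subseteq> V" for k
  proof (induction k)
    case (Suc k)
    then show ?case using dec[of k] by blast
  qed (simp add: C0)
  have "trace_on (C k) f = trace_on V f" for k
  proof (induction k)
    case (Suc k)
    have "trace_on (C k) f = trace_on (C (Suc k)) f"
      using trace_on_restrict[OF sub sub dec linear_on_subset[OF f(1) CV] f(2)] .
    then show ?case using Suc.IH by simp
  qed (simp add: C0)
  from this[of m] show ?thesis using Cm by (simp add: trace_on_zero_space)
qed

lemma trace_on_neg:
  assumes "subspace V" "\<And>x. x \<in> V \<Longrightarrow> f x \<in> V"
  shows "trace_on V (\<lambda>x. - f x) = - trace_on V f"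
proof -
  have "real_vector.representation (basis_of V) (- f b) = (\<lambda>c. - real_vector.representation (basis_of V) (f b) c)"
    if "b \<in> basis_of V" for b
    using assms basis_of_subset[OF assms(1)] that
    by (intro real_vector.representation_neg) (auto simp: independent_basis_of span_basis_of)
  then show ?thesis by (simp add: trace_on_def sum_negf)
qed

section \<open>Nondegenerate symmetric forms\<close>

lemma bilinear_sum_left: "bilinear h \<Longrightarrow> h (\<Sum>i\<in>I. g i) y = (\<Sum>i\<in>I. h (g i) y)"
  unfolding bilinear_def using linear_sum[of "\<lambda>x. h x y"] by (simp add: o_def)

lemma bilinear_sum_right: "bilinear h \<Longrightarrow> h y (\<Sum>i\<in>I. g i) = (\<Sum>i\<in>I. h y (g i))"
  unfolding bilinear_def using linear_sum[of "\<lambda>x. h y x"] by (simp add: o_def)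

lemma bilinear_sum_scaleR_left:
  "bilinear (h :: 'a::real_vector \<Rightarrow> 'b::real_vector \<Rightarrow> real) \<Longrightarrow>
    h (\<Sum>i\<in>I. c i *\<^sub>R g i) y = (\<Sum>i\<in>I. c i * h (g i) y)"
  by (simp add: bilinear_sum_left bilinear_lmul)

lemma bilinear_sum_scaleR_right:
  "bilinear (h :: 'a::real_vector \<Rightarrow> 'b::real_vector \<Rightarrow> real) \<Longrightarrow>
    h y (\<Sum>i\<in>I. c i *\<^sub>R g i) = (\<Sum>i\<in>I. c i * h y (g i))"
  by (simp add: bilinear_sum_right bilinear_rmul)

lemma bilinear_compose:
  "bilinear h \<Longrightarrow> linear f \<Longrightarrow> linear g \<Longrightarrow> bilinear (\<lambda>a b. h (f a) (g b))"
  unfolding bilinear_def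
  by (auto intro: linear_compose[of g "h (f _)", unfolded o_def]
      linear_compose[of f "\<lambda>x. h x (g _)", unfolded o_def])

lemma bilinear_swap: "bilinear h \<Longrightarrow> bilinear (\<lambda>a b. h b a)"
  unfolding bilinear_def by auto

lemma linear_inj_on_subspace_onto:
  fixes F :: "'a::euclidean_space \<Rightarrow> 'a"
  assumes "linear F" "subspace V" "F ` V \<subseteq> V" "inj_on F V"
  shows "F ` V = V"
proof -
  have "span V = V" using assms(2) by (simp add: span_eq_iff)
  then have "dim (F ` V) = dim V" using eucl.dim_image_eq[OF assms(1)] assms(4) by metis
  moreover have "subspace (F ` V)" using assms(1,2) real_vector.linear_subspace_image by blast
  ultimately show ?thesis using subspace_dim_equal assms(2,3) by (metis order_refl)
qed

lemma subspace_orthonormal_expansion: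
  fixes V :: "'a::euclidean_space set"
  assumes "subspace V"
  obtains OB where "OB \<subseteq> V" "finite OB" "\<And>x. x \<in> V \<Longrightarrow> x = (\<Sum>b\<in>OB. (x \<bullet> b) *\<^sub>R b)"
proof -
  obtain OB where OB: "OB \<subseteq> V" "pairwise orthogonal OB" "\<And>x. x \<in> OB \<Longrightarrow> norm x = 1"
    "independent OB" "span OB = V"
    using orthonormal_basis_subspace[OF assms] by metis
  then have "finite OB" using independent_imp_finite by blast
  then show ?thesis
    using that OB orthonormal_basis_expand[OF OB(2,3) _ \<open>finite OB\<close>] by auto
qed

lemma linear_on_inner_representation:
  fixes V :: "'a::euclidean_space set"
  assumes V: "subspace V" and l: "linear_on V l"
  shows "\<exists>w\<in>V. \<forall>x\<in>V. l x = x \<bullet> w"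
proof -
  obtain OB where OB: "OB \<subseteq> V" "finite OB" "\<And>x. x \<in> V \<Longrightarrow> x = (\<Sum>b\<in>OB. (x \<bullet> b) *\<^sub>R b)"
    using subspace_orthonormal_expansion[OF V] by blast
  show ?thesis
  proof (intro bexI ballI)
    show "(\<Sum>b\<in>OB. l b *\<^sub>R b) \<in> V" using OB(1) V by (intro subspace_sum subspace_scale) auto
    fix x assume "x \<in> V"
    then have "l x = l (\<Sum>b\<in>OB. (x \<bullet> b) *\<^sub>R b)" using OB(3) by simp
    also have "\<dots> = (\<Sum>b\<in>OB. (x \<bullet> b) * l b)"
      using linear_on_sum[OF V l, of OB "\<lambda>b. b" "\<lambda>b. x \<bullet> b"] OB(1) by auto
    finally show "l x = x \<bullet> (\<Sum>b\<in>OB. l b *\<^sub>R b)" by (simp add: inner_sum_right mult.commute)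
  qed
qed

text \<open>The form may be indefinite: written in an orthonormal basis of the ambient inner product
  it becomes an injective, hence surjective, endomorphism \<open>F\<close> of \<open>V\<close>.\<close>

lemma lie_metric_represents:
  fixes V :: "'a::euclidean_space set"
  assumes V: "subspace V" and Bf: "lie_metric V Bf" and l: "linear_on V l"
  shows "\<exists>y\<in>V. \<forall>x\<in>V. Bf y x = l x"
proof -
  have bil: "bilinear Bf" and sym: "\<And>x y. x \<in> V \<Longrightarrow> y \<in> V \<Longrightarrow> Bf x y = Bf y x"
    and nd: "\<And>x. x \<in> V \<Longrightarrow> (\<forall>y\<in>V. Bf x y = 0) \<Longrightarrow> x = 0"
    using Bf unfolding lie_metric_def by auto
  obtain OB where OB: "OB \<subseteq> V" "finite OB" "\<And>x. x \<in> V \<Longrightarrow> x = (\<Sum>b\<in>OB. (x \<bullet> b) *\<^sub>R b)"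
    using subspace_orthonormal_expansion[OF V] by blast
  define F where "F y = (\<Sum>b\<in>OB. Bf b y *\<^sub>R b)" for y
  have linF: "linear F"
    unfolding F_def using bil
    by (intro linearI)
      (simp_all add: bilinear_radd bilinear_rmul scaleR_add_left sum.distrib scaleR_sum_right)
  have FV: "F ` V \<subseteq> V"
    unfolding F_def using OB(1) V by (auto intro!: subspace_sum subspace_scale)
  have inner_F: "x \<bullet> F y = Bf x y" if "x \<in> V" for x y
  proof -
    have "x \<bullet> F y = (\<Sum>b\<in>OB. (x \<bullet> b) * Bf b y)"
      unfolding F_def by (simp add: inner_sum_right mult.commute)
    also have "\<dots> = Bf (\<Sum>b\<in>OB. (x \<bullet> b) *\<^sub>R b) y"
      by (simp add: bilinear_sum_scaleR_left[OF bil])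
    finally show ?thesis using OB(3)[OF that] by simp
  qed
  have "inj_on F V"
  proof (rule inj_onI)
    fix x y assume xy: "x \<in> V" "y \<in> V" "F x = F y"
    then have d: "x - y \<in> V" "F (x - y) = 0"
      using V linF by (auto simp: subspace_diff linear_diff)
    then have "\<forall>z\<in>V. Bf (x - y) z = 0"
      using inner_F sym by (metis inner_zero_right)
    then show "x = y" using nd[OF d(1)] by simp
  qed
  then have "F ` V = V" using linear_inj_on_subspace_onto linF V FV by blast
  moreover obtain w where "w \<in> V" "\<forall>x\<in>V. l x = x \<bullet> w"
    using linear_on_inner_representation[OF V l] by blast
  ultimately obtain y where "y \<in> V" "\<forall>x\<in>V. l x = x \<bullet> F y" by (metis imageE)
  then show ?thesis using inner_F sym by metis
qed

lemma lie_metric_eqI: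
  assumes "lie_metric V Bf" "subspace V" "x \<in> V" "y \<in> V" "\<And>z. z \<in> V \<Longrightarrow> Bf x z = Bf y z"
  shows "x = y"
proof -
  have "Bf (x - y) z = 0" if "z \<in> V" for z
    using assms(1) assms(5)[OF that] unfolding lie_metric_def by (simp add: bilinear_lsub)
  then show ?thesis
    using assms(1-4) subspace_diff[of V x y] unfolding lie_metric_def by auto
qed

lemma lie_metric_the_eq:
  assumes "lie_metric V Bf" "subspace V" "w \<in> V" "\<And>z. z \<in> V \<Longrightarrow> Bf w z = \<phi> z"
  shows "(THE W. W \<in> V \<and> (\<forall>z\<in>V. Bf W z = \<phi> z)) = w"
  using assms by (intro the_equality) (auto intro: lie_metric_eqI[OF assms(1,2)])

section \<open>Traces of endomorphisms of \<open>real^'n\<close>\<close>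

abbreviation E :: "'n::finite \<Rightarrow> real^'n" where "E i \<equiv> axis i 1"

lemma basis_expansion_scaleR: "(\<Sum>i\<in>UNIV. x $ i *\<^sub>R E i) = (x::real^'n)"
  using basis_expansion[of x] by (simp add: scalar_mult_eq_scaleR)

lemma linear_basis_expansion: "linear f \<Longrightarrow> f x = (\<Sum>i\<in>UNIV. x $ i *\<^sub>R f (E i))"
  using linear_sum[of f "\<lambda>i. x $ i *\<^sub>R E i" UNIV] basis_expansion_scaleR[of x]
  by (simp add: linear_scale)

definition trace_map :: "(real^'n \<Rightarrow> real^'n) \<Rightarrow> real" where
  "trace_map f = (\<Sum>i\<in>UNIV. f (E i) $ i)"

lemma trace_map_add: "trace_map (\<lambda>x. f x + g x) = trace_map f + trace_map g"
  by (simp add: trace_map_def sum.distrib)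

lemma trace_map_diff: "trace_map (\<lambda>x. f x - g x) = trace_map f - trace_map g"
  by (simp add: trace_map_def sum_subtractf)

lemma trace_map_scaleR: "trace_map (\<lambda>x. c *\<^sub>R f x) = c * trace_map f"
  by (simp add: trace_map_def sum_distrib_left)

lemma trace_map_neg: "trace_map (\<lambda>x. - f x) = - trace_map f"
  by (simp add: trace_map_def sum_negf)

lemma trace_map_matrix: "trace_map (\<lambda>x. M *v x) = trace M"
  by (simp add: trace_map_def trace_def matrix_vector_mult_def axis_def if_distrib cong: if_cong)

lemma trace_map_comp_commute:
  assumes "linear f" "linear g"
  shows "trace_map (\<lambda>x. f (g x)) = trace_map (\<lambda>x. g (f x))"
proof -
  have "trace_map (\<lambda>x. f (g x)) = (\<Sum>i\<in>UNIV. \<Sum>j\<in>UNIV. g (E i) $ j * f (E j) $ i)"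
    unfolding trace_map_def by (subst linear_basis_expansion[OF assms(1)]) simp
  also have "\<dots> = (\<Sum>j\<in>UNIV. \<Sum>i\<in>UNIV. f (E j) $ i * g (E i) $ j)"
    by (subst sum.swap) (simp add: mult.commute)
  also have "\<dots> = trace_map (\<lambda>x. g (f x))"
    unfolding trace_map_def by (subst linear_basis_expansion[OF assms(2)]) simp
  finally show ?thesis .
qed

lemma trace_on_UNIV:
  fixes f :: "real^'n \<Rightarrow> real^'n"
  assumes "linear f"
  shows "trace_on UNIV f = trace_map f"
  unfolding trace_map_def
proof (rule trace_on_frame[where c = E and \<phi> = "\<lambda>i x. x $ i"])
  show "x = (\<Sum>i\<in>UNIV. x $ i *\<^sub>R E i)" for x :: "real^'n"
    by (rule basis_expansion_scaleR[symmetric])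
  show "linear_on UNIV f" using assms by (rule linear_imp_linear_on)
  show "linear_on UNIV (\<lambda>x. x $ i)" for i :: 'n by (simp add: linear_on_def)
qed auto

lemma trace_map_comp_through_subspace:
  fixes f :: "real^'n \<Rightarrow> 'a::euclidean_space"
  assumes W: "subspace W" and f: "linear f" "\<And>x. f x \<in> W" and g: "linear_on W g"
  shows "trace_map (\<lambda>p. g (f p)) = trace_on W (\<lambda>X. f (g X))"
proof -
  let ?S = "basis_of W"
  let ?R = "real_vector.representation ?S"
  have S: "?S \<subseteq> W" "independent ?S" "span ?S = W" "finite ?S"
    using W by (rule basis_of_subset independent_basis_of span_basis_of finite_basis_of)+
  have R_linear: "linear_on W (\<lambda>x. ?R x X)" for X
    using linear_on_representation[OF S(2,3)] .
  have gf: "g (f p) = (\<Sum>X\<in>?S. ?R (f p) X *\<^sub>R g X)" for p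
  proof -
    have "f p = (\<Sum>X\<in>?S. ?R (f p) X *\<^sub>R X)"
      using real_vector.sum_representation_eq[of ?S "f p" ?S] S f(2) by simp
    then show ?thesis
      using linear_on_sum[OF W g, of ?S "\<lambda>X. X" "?R (f p)"] S(1) by (auto simp: subset_iff)
  qed
  have "trace_map (\<lambda>p. g (f p)) = (\<Sum>X\<in>?S. \<Sum>i\<in>UNIV. g X $ i * ?R (f (E i)) X)"
    unfolding trace_map_def gf by (simp add: sum.swap[of _ UNIV] mult.commute)
  also have "\<dots> = (\<Sum>X\<in>?S. ?R (f (g X)) X)"
  proof (intro sum.cong refl)
    fix X
    have "f (g X) = (\<Sum>i\<in>UNIV. g X $ i *\<^sub>R f (E i))"
      by (rule linear_basis_expansion[OF f(1)])
    then show "(\<Sum>i\<in>UNIV. g X $ i * ?R (f (E i)) X) = ?R (f (g X)) X"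
      using linear_on_sum[OF W R_linear, of UNIV "\<lambda>i. f (E i)" "\<lambda>i. g X $ i"] f(2) by simp
  qed
  finally show ?thesis by (simp add: trace_on_def)
qed

lemma trace_on_UNIV_Times:
  fixes f :: "(real^'n) \<times> 'a::euclidean_space \<Rightarrow> (real^'n) \<times> 'a"
  assumes A: "subspace A" and f: "linear_on (UNIV \<times> A) f" "\<And>P. P \<in> UNIV \<times> A \<Longrightarrow> f P \<in> UNIV \<times> A"
  shows "trace_on (UNIV \<times> A) f = trace_map (\<lambda>p. fst (f (p, 0))) + trace_on A (\<lambda>X. snd (f (0, X)))"
proof -
  let ?S = "basis_of A"
  let ?R = "real_vector.representation ?S"
  have S: "?S \<subseteq> A" "independent ?S" "span ?S = A" "finite ?S"
    using A by (rule basis_of_subset independent_basis_of span_basis_of finite_basis_of)+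
  have "trace_on (UNIV \<times> A) f
      = (\<Sum>i\<in>UNIV. fst (f (E i, 0)) $ i) + (\<Sum>X\<in>?S. ?R (snd (f (0, X))) X)"
  proof (rule trace_on_frame_Plus[OF subspace_Times[OF subspace_UNIV A] f])
    show "(E i, 0) \<in> UNIV \<times> A" for i :: 'n using A by (simp add: subspace_0)
    show "(0, X) \<in> UNIV \<times> A" if "X \<in> ?S" for X using that S(1) by auto
    show "linear_on (UNIV \<times> A) (\<lambda>P. fst P $ i)" for i :: 'n by (simp add: linear_on_def)
    show "linear_on (UNIV \<times> A) (\<lambda>P. ?R (snd P) X)" for X
      using linear_on_representation[OF S(2,3), of X] by (auto simp: linear_on_def)
    show "P = (\<Sum>i\<in>UNIV. fst P $ i *\<^sub>R (E i, 0)) + (\<Sum>X\<in>?S. ?R (snd P) X *\<^sub>R (0, X))"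
      if "P \<in> UNIV \<times> A" for P
    proof -
      have "(\<Sum>X\<in>?S. ?R (snd P) X *\<^sub>R X) = snd P"
        using real_vector.sum_representation_eq[of ?S "snd P" ?S] S that by auto
      then show ?thesis by (simp add: prod_eq_iff fst_sum snd_sum basis_expansion_scaleR)
    qed
  qed (use S in auto)
  then show ?thesis by (simp add: trace_map_def trace_on_def)
qed

lemma matrix_add_rdistrib: "((X::real^'n^'n) + Y) ** Z = X ** Z + Y ** Z"
  by (simp add: matrix_matrix_mult_def vec_eq_iff sum.distrib algebra_simps)

lemma trace_scaleR: "trace ((c::real) *\<^sub>R (X::real^'n^'n)) = c * trace X"
  by (simp add: trace_def sum_distrib_left)

lemma trace_matrix_mult_sum:
  "trace ((X::real^'n^'n) ** Y) = (\<Sum>i\<in>UNIV. \<Sum>j\<in>UNIV. X $ i $ j * Y $ j $ i)"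
  by (simp add: trace_def matrix_matrix_mult_def)

section \<open>A metric on \<open>real^'n\<close>: dual basis and adjoints\<close>

locale vector_metric =
  fixes B :: "real^'n \<Rightarrow> real^'n \<Rightarrow> real"
  assumes metric: "lie_metric UNIV B"
begin

lemma B_bilinear: "bilinear B"
  and B_sym: "B x y = B y x"
  and B_nondegenerate: "(\<And>y. B x y = 0) \<Longrightarrow> x = 0"
  using metric unfolding lie_metric_def by auto

lemma B_eqI:
  assumes "\<And>z. B x z = B y z"
  shows "x = y"
proof -
  have "B (x - y) z = 0" for z using assms by (simp add: bilinear_lsub[OF B_bilinear])
  then show ?thesis using B_nondegenerate[of "x - y"] by simp
qed

lemma B_eqI_right: "(\<And>z. B z x = B z y) \<Longrightarrow> x = y"
  using B_eqI B_sym by metis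

definition dual :: "'n \<Rightarrow> real^'n" where
  "dual i = (SOME y. \<forall>x. B y x = x $ i)"

lemma B_dual_left: "B (dual i) x = x $ i"
proof -
  have "linear_on UNIV (\<lambda>x::real^'n. x $ i)" by (simp add: linear_on_def)
  then have "\<exists>y. \<forall>x. B y x = x $ i"
    using lie_metric_represents[OF subspace_UNIV metric] by auto
  then have "\<forall>x. B (dual i) x = x $ i"
    unfolding dual_def by (rule someI_ex)
  then show ?thesis by blast
qed

lemma B_dual_right: "B x (dual i) = x $ i"
  using B_dual_left B_sym by metis

lemma dual_expansion: "(\<Sum>i\<in>UNIV. B x (E i) *\<^sub>R dual i) = x"
proof (rule B_eqI)
  fix z
  have "B (\<Sum>i\<in>UNIV. B x (E i) *\<^sub>R dual i) z = (\<Sum>i\<in>UNIV. B x (E i) * z $ i)"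
    by (simp add: bilinear_sum_scaleR_left[OF B_bilinear] B_dual_left)
  also have "\<dots> = B x (\<Sum>i\<in>UNIV. z $ i *\<^sub>R E i)"
    by (simp add: bilinear_sum_scaleR_right[OF B_bilinear] mult.commute)
  finally show "B (\<Sum>i\<in>UNIV. B x (E i) *\<^sub>R dual i) z = B x z"
    by (simp add: basis_expansion_scaleR)
qed

lemma trace_map_eq_sum_dual: "trace_map f = (\<Sum>i\<in>UNIV. B (f (E i)) (dual i))"
  by (simp add: trace_map_def B_dual_right)

lemma dual_nth_sym: "dual k $ i = dual i $ k"
  using B_dual_left[of i "dual k"] B_dual_left[of k "dual i"] B_sym[of "dual i" "dual k"] by simp

lemma sum_dual_swap:
  fixes \<phi> :: "real^'n \<Rightarrow> real^'n \<Rightarrow> real"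
  assumes "bilinear \<phi>"
  shows "(\<Sum>i\<in>UNIV. \<phi> (E i) (dual i)) = (\<Sum>i\<in>UNIV. \<phi> (dual i) (E i))"
proof -
  have "(\<Sum>i\<in>UNIV. \<phi> (E i) (dual i)) = (\<Sum>i\<in>UNIV. \<Sum>k\<in>UNIV. dual i $ k * \<phi> (E i) (E k))"
    by (subst (1) basis_expansion_scaleR[symmetric]) (simp only: bilinear_sum_scaleR_right[OF assms])
  also have "\<dots> = (\<Sum>k\<in>UNIV. \<Sum>i\<in>UNIV. dual k $ i * \<phi> (E i) (E k))"
    by (subst sum.swap) (simp only: dual_nth_sym)
  also have "\<dots> = (\<Sum>k\<in>UNIV. \<phi> (dual k) (E k))"
    by (subst (2) basis_expansion_scaleR[symmetric]) (simp only: bilinear_sum_scaleR_left[OF assms])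
  finally show ?thesis .
qed

lemma sum_dual_selfadjoint:
  fixes \<phi> :: "real^'n \<Rightarrow> real^'n \<Rightarrow> real"
  assumes "bilinear \<phi>" "linear S" "\<And>x y. B (S x) y = B x (S y)"
  shows "(\<Sum>i\<in>UNIV. \<phi> (S (E i)) (dual i)) = (\<Sum>i\<in>UNIV. \<phi> (E i) (S (dual i)))"
proof -
  have coord: "S (E i) $ k = B (S (dual k)) (E i)" for i k
    using B_dual_left[of k "S (E i)"] assms(3)[of "dual k" "E i"] by simp
  have "(\<Sum>i\<in>UNIV. \<phi> (S (E i)) (dual i))
      = (\<Sum>i\<in>UNIV. \<Sum>k\<in>UNIV. S (E i) $ k * \<phi> (E k) (dual i))"
    by (subst (1) basis_expansion_scaleR[symmetric]) (simp only: bilinear_sum_scaleR_left[OF assms(1)])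
  also have "\<dots> = (\<Sum>k\<in>UNIV. \<phi> (E k) (\<Sum>i\<in>UNIV. B (S (dual k)) (E i) *\<^sub>R dual i))"
    by (subst sum.swap) (simp only: coord bilinear_sum_scaleR_right[OF assms(1)])
  also have "\<dots> = (\<Sum>k\<in>UNIV. \<phi> (E k) (S (dual k)))"
    by (simp only: dual_expansion)
  finally show ?thesis .
qed

definition B_adjoint :: "(real^'n \<Rightarrow> real^'n) \<Rightarrow> real^'n \<Rightarrow> real^'n" where
  "B_adjoint f y = (\<Sum>i\<in>UNIV. B (f (E i)) y *\<^sub>R dual i)"

lemma linear_B_adjoint: "linear (B_adjoint f)"
  unfolding B_adjoint_def using B_bilinear
  by (intro linearI)
    (simp_all add: bilinear_radd bilinear_rmul scaleR_add_left sum.distrib scaleR_sum_right)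

lemma B_adjoint_right:
  assumes "linear f"
  shows "B x (B_adjoint f y) = B (f x) y"
proof -
  have "B x (B_adjoint f y) = B (\<Sum>i\<in>UNIV. x $ i *\<^sub>R f (E i)) y"
    unfolding B_adjoint_def
    by (simp add: bilinear_sum_scaleR_right[OF B_bilinear] bilinear_sum_scaleR_left[OF B_bilinear]
        B_dual_right mult.commute)
  then show ?thesis by (simp only: linear_basis_expansion[OF assms, symmetric])
qed

lemma B_adjoint_left: "linear f \<Longrightarrow> B (B_adjoint f y) x = B y (f x)"
  by (simp add: B_sym[of "B_adjoint f y" x] B_adjoint_right B_sym[of "f x" y])

lemma B_adjoint_unique:
  "linear f \<Longrightarrow> (\<And>x y. B (f x) y = B x (h y)) \<Longrightarrow> B_adjoint f y = h y"
  by (rule B_eqI_right) (simp add: B_adjoint_right)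

lemma B_adjoint_adjoint: "linear f \<Longrightarrow> B_adjoint (B_adjoint f) x = f x"
  by (rule B_adjoint_unique[OF linear_B_adjoint]) (rule B_adjoint_left)

lemma trace_map_adjoint_comp:
  assumes "linear f" "linear g"
  shows "trace_map (\<lambda>x. B_adjoint f (g x)) = trace_map (\<lambda>x. B_adjoint g (f x))"
proof -
  have "trace_map (\<lambda>x. B_adjoint f (g x)) = (\<Sum>i\<in>UNIV. B (g (E i)) (f (dual i)))"
    unfolding trace_map_eq_sum_dual by (simp add: B_adjoint_left[OF assms(1)])
  also have "\<dots> = (\<Sum>i\<in>UNIV. B (g (dual i)) (f (E i)))"
    using sum_dual_swap[OF bilinear_compose[OF B_bilinear assms(2,1)]] .
  also have "\<dots> = trace_map (\<lambda>x. B_adjoint g (f x))"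
    unfolding trace_map_eq_sum_dual by (simp add: B_adjoint_left[OF assms(2)] B_sym[of "g _"])
  finally show ?thesis .
qed

text \<open>A commutator of self-adjoint maps is skew-adjoint; if it is also self-adjoint it vanishes.\<close>

lemma self_adjoint_commutator_imp_commute:
  assumes X: "self_adjoint_wrt B X" and Y: "self_adjoint_wrt B Y"
    and XY: "self_adjoint_wrt B (X ** Y - Y ** X)"
  shows "X ** Y = Y ** X"
proof -
  let ?C = "X ** Y - Y ** X"
  have "B (?C *v x) y = - B (?C *v x) y" for x y
  proof -
    have "B (?C *v x) y = B (X *v (Y *v x)) y - B (Y *v (X *v x)) y"
      by (simp add: matrix_vector_mult_diff_rdistrib matrix_vector_mul_assoc[symmetric]
          bilinear_lsub[OF B_bilinear])
    also have "\<dots> = B x (Y *v (X *v y)) - B x (X *v (Y *v y))"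
      using X Y unfolding self_adjoint_wrt_def by simp
    also have "\<dots> = - B x (?C *v y)"
      by (simp add: matrix_vector_mult_diff_rdistrib matrix_vector_mul_assoc[symmetric]
          bilinear_rsub[OF B_bilinear])
    finally show ?thesis using XY unfolding self_adjoint_wrt_def by simp
  qed
  then have "?C *v x = 0" for x using B_nondegenerate by simp
  then have "?C = 0" by (simp add: matrix_eq)
  then show ?thesis by simp
qed

end

section \<open>Metric nilpotent Lie algebras\<close>

locale metric_nilpotent_lie = vector_metric B for B :: "real^'n \<Rightarrow> real^'n \<Rightarrow> real" +
  fixes br :: "real^'n \<Rightarrow> real^'n \<Rightarrow> real^'n"
  assumes lie: "lie_algebra UNIV br" and nilpotent: "nilpotent_lie UNIV br"
begin

lemma bracket_bilinear: "bilinear br"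
  and bracket_self: "br x x = 0"
  and jacobi: "br x (br y z) + br y (br z x) + br z (br x y) = 0"
  using lie unfolding lie_algebra_def by auto

lemma bracket_antisym: "br x y = - br y x"
proof -
  have "br (x + y) (x + y) = 0" by (rule bracket_self)
  then have "br x x + br x y + br y x + br y y = 0"
    using bracket_bilinear by (simp add: bilinear_ladd bilinear_radd algebra_simps)
  then show ?thesis by (simp add: bracket_self eq_neg_iff_add_eq_0)
qed

lemma linear_bracket_right: "linear (br y)"
  and linear_bracket_left: "linear (\<lambda>x. br x y)"
  using bracket_bilinear unfolding bilinear_def by auto

abbreviation C :: "nat \<Rightarrow> (real^'n) set" where
  "C k \<equiv> lower_central UNIV br k"

lemma subspace_C: "subspace (C k)"
  by (cases k) (auto simp: subspace_UNIV subspace_span)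

lemma bracket_C_right: "y \<in> C k \<Longrightarrow> br x y \<in> C (Suc k)"
  by (auto intro: span_base)

lemma bracket_C_left: "x \<in> C k \<Longrightarrow> br x y \<in> C (Suc k)"
  using bracket_C_right[of x k y] subspace_neg[OF subspace_C] bracket_antisym[of x y] by metis

lemma C_Suc_subset: "C (Suc k) \<subseteq> C k"
proof (induction k)
  case (Suc k)
  then have "{br x y |x y. x \<in> UNIV \<and> y \<in> C (Suc k)} \<subseteq> {br x y |x y. x \<in> UNIV \<and> y \<in> C k}"
    by blast
  then show ?case by (simp only: lower_central.simps) (rule span_mono)
qed simp

lemma C_eventually_zero: "\<exists>m. C m = {0}"
  using nilpotent unfolding nilpotent_lie_def by blast

lemma trace_map_lowering_zero:
  assumes "linear f" "\<And>k x. x \<in> C k \<Longrightarrow> f x \<in> C (Suc k)"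
  shows "trace_map f = 0"
proof -
  obtain m where "C m = {0}" using C_eventually_zero by blast
  then have "trace_on UNIV f = 0"
    using trace_on_flag_lowering[of C, OF subspace_C C_Suc_subset _ _ linear_imp_linear_on assms(2)]
      assms(1) by auto
  then show ?thesis using trace_on_UNIV[OF assms(1)] by simp
qed

lemma bracket_bracket_trace_zero:
  shows "trace_map (\<lambda>x. br y (br x z)) = 0"
    and "trace_map (\<lambda>x. br (br x y) z) = 0"
    and "trace_map (\<lambda>x. br z (br y x)) = 0"
  by (rule trace_map_lowering_zero, rule linear_compose[OF _ _, unfolded o_def],
      (rule linear_bracket_left linear_bracket_right)+,
      meson bracket_C_left bracket_C_right C_Suc_subset subsetD)+

lemma derivation_preserves_C:
  assumes "is_derivation br Z" "x \<in> C k"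
  shows "Z *v x \<in> C k"
  using assms(2)
proof (induction k arbitrary: x)
  case (Suc k)
  let ?G = "{br a b |a b. a \<in> UNIV \<and> b \<in> C k}"
  have "(*v) Z ` ?G \<subseteq> C (Suc k)"
  proof
    fix w assume "w \<in> (*v) Z ` ?G"
    then obtain a b where ab: "b \<in> C k" "w = Z *v br a b" by blast
    then have "w = br (Z *v a) b + br a (Z *v b)"
      using assms(1) unfolding is_derivation_def by simp
    then show "w \<in> C (Suc k)"
      using bracket_C_right ab Suc.IH subspace_C[of "Suc k"] by (simp add: subspace_add)
  qed
  then have "span ((*v) Z ` ?G) \<subseteq> C (Suc k)"
    using subspace_C by (rule span_minimal)
  then have "(*v) Z ` span ?G \<subseteq> C (Suc k)"
    by (simp add: real_vector.linear_span_image[OF matrix_vector_mul_linear])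
  then show ?case using Suc.prems by auto
qed simp

definition K :: "real^'n \<Rightarrow> real^'n \<Rightarrow> real^'n" where
  "K a b = B_adjoint (br b) a"

lemma B_K_left: "B (K a b) d = B a (br b d)"
  by (simp add: K_def B_adjoint_left[OF linear_bracket_right])

lemma B_K_right: "B d (K a b) = B a (br b d)"
  using B_K_left B_sym by metis

lemma bilinear_K: "bilinear K"
  unfolding bilinear_def
proof (intro allI conjI)
  show "linear (K y)" for y
    by (intro linearI; rule B_eqI)
      (simp_all add: B_K_left bilinear_ladd[OF bracket_bilinear] bilinear_lmul[OF bracket_bilinear]
        bilinear_radd[OF B_bilinear] bilinear_rmul[OF B_bilinear]
        bilinear_ladd[OF B_bilinear] bilinear_lmul[OF B_bilinear])
  show "linear (\<lambda>x. K x y)" for y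
    by (intro linearI; rule B_eqI)
      (simp_all add: B_K_left bilinear_ladd[OF B_bilinear] bilinear_lmul[OF B_bilinear])
qed

lemma linear_K_right: "linear (K y)"
  using bilinear_K unfolding bilinear_def by auto

lemma B_adjoint_K: "B_adjoint (K y) x = - K y x"
proof (rule B_adjoint_unique[OF linear_K_right])
  show "B (K y a) d = B a (- K y d)" for a d
    by (simp add: B_K_left B_K_right bilinear_rneg[OF B_bilinear] bracket_antisym[of d a])
qed

definition nabla :: "real^'n \<Rightarrow> real^'n \<Rightarrow> real^'n" where
  "nabla a b = (1/2) *\<^sub>R (br a b - K a b - K b a)"

lemma nabla_koszul: "B (nabla a b) d = (B (br a b) d - B (br b d) a + B (br d a) b) / 2"
proof -
  have "B (nabla a b) d = (1/2) * (B (br a b) d - B a (br b d) - B b (br a d))"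
    unfolding nabla_def by (simp add: bilinear_lmul[OF B_bilinear] bilinear_lsub[OF B_bilinear] B_K_left)
  also have "\<dots> = (B (br a b) d - B (br b d) a + B (br d a) b) / 2"
    using bracket_antisym[of a d] B_sym[of a "br b d"] B_sym[of b "br d a"]
    by (simp add: bilinear_rneg[OF B_bilinear])
  finally show ?thesis .
qed

lemma levi_civita_eq_nabla: "levi_civita UNIV br B a b = nabla a b"
  unfolding levi_civita_def
  by (rule lie_metric_the_eq[OF metric subspace_UNIV]) (simp_all add: nabla_koszul)

lemma bilinear_nabla: "bilinear nabla"
  unfolding bilinear_def nabla_def
  by (intro allI conjI linearI)
    (simp_all add: bilinear_radd[OF bracket_bilinear] bilinear_rmul[OF bracket_bilinear]
      bilinear_ladd[OF bracket_bilinear] bilinear_lmul[OF bracket_bilinear]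
      bilinear_radd[OF bilinear_K] bilinear_rmul[OF bilinear_K] bilinear_ladd[OF bilinear_K]
      bilinear_lmul[OF bilinear_K] algebra_simps)

lemma linear_nabla_right: "linear (nabla y)"
  and linear_nabla_left: "linear (\<lambda>x. nabla x y)"
  using bilinear_nabla unfolding bilinear_def by auto

lemma bilinear_B_bracket: "bilinear (\<lambda>a b. B (br a b) w)"
  using bilinear_compose[OF bracket_bilinear linear_id linear_id] B_bilinear
  unfolding bilinear_def by (auto intro: linear_compose[of _ "\<lambda>x. B x w", unfolded o_def])

lemma sum_diff_add_divide_2:
  "(\<Sum>i\<in>UNIV. (a i - b i + c i) / (2::real)) =
     ((\<Sum>i\<in>UNIV. a i) - (\<Sum>i\<in>UNIV. b i) + (\<Sum>i\<in>UNIV. c i)) / 2"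
  by (simp add: sum_divide_distrib[symmetric] sum.distrib sum_subtractf)

text \<open>In the next two lemmas each of the three Koszul terms vanishes: either the map lowers the
  central series (nilpotency), or the sum is its own negative by self-adjointness and
  antisymmetry of the bracket.\<close>

lemma trace_map_nabla_selfadjoint_left:
  assumes Y: "linear Y" "\<And>x y. B (Y x) y = B x (Y y)" "\<And>k x. x \<in> C k \<Longrightarrow> Y x \<in> C k"
  shows "trace_map (\<lambda>p. nabla (Y p) w) = 0"
proof -
  define a where "a = (\<Sum>i\<in>UNIV. B (br (Y (E i)) w) (dual i))"
  define b where "b = (\<Sum>i\<in>UNIV. B (br w (dual i)) (Y (E i)))"
  define c where "c = (\<Sum>i\<in>UNIV. B (br (dual i) (Y (E i))) w)"
  have "trace_map (\<lambda>p. nabla (Y p) w) = (a - b + c) / 2"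
    unfolding trace_map_eq_sum_dual nabla_koszul a_def b_def c_def by (rule sum_diff_add_divide_2)
  moreover have "a = trace_map (\<lambda>p. br (Y p) w)"
    by (simp add: a_def trace_map_eq_sum_dual)
  moreover have "trace_map (\<lambda>p. br (Y p) w) = 0"
    by (rule trace_map_lowering_zero)
      (rule linear_compose[OF Y(1) linear_bracket_left, unfolded o_def], blast intro: bracket_C_left Y(3))
  moreover have "b = (\<Sum>i\<in>UNIV. B (Y (dual i)) (br w (E i)))"
    unfolding b_def using sum_dual_swap[OF bilinear_compose[OF B_bilinear Y(1) linear_bracket_right]]
    by (simp add: B_sym)
  moreover have "\<dots> = trace_map (\<lambda>p. Y (br w p))"
    by (simp add: trace_map_eq_sum_dual Y(2) B_sym)
  moreover have "trace_map (\<lambda>p. Y (br w p)) = 0"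
    by (rule trace_map_lowering_zero)
      (rule linear_compose[OF linear_bracket_right Y(1), unfolded o_def], blast intro: bracket_C_right Y(3))
  moreover have "c = - c"
  proof -
    have bf: "bilinear (\<lambda>a b. B (br b a) w)" by (rule bilinear_swap[OF bilinear_B_bracket])
    have "c = (\<Sum>i\<in>UNIV. B (br (Y (dual i)) (E i)) w)"
      unfolding c_def using sum_dual_selfadjoint[OF bf Y(1) Y(2)] by simp
    also have "\<dots> = (\<Sum>i\<in>UNIV. B (br (Y (E i)) (dual i)) w)"
      using sum_dual_swap[OF bilinear_compose[OF bf linear_id Y(1)]] by simp
    finally show ?thesis
      by (simp add: c_def bracket_antisym[of "Y _"] bilinear_lneg[OF B_bilinear] sum_negf)
  qed
  ultimately show ?thesis by simp
qed

lemma trace_map_nabla_selfadjoint_right: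
  assumes Z: "linear Z" "\<And>x y. B (Z x) y = B x (Z y)" "\<And>k x. x \<in> C k \<Longrightarrow> Z x \<in> C k"
  shows "trace_map (\<lambda>p. nabla v (Z p)) = 0"
proof -
  define a where "a = (\<Sum>i\<in>UNIV. B (br v (Z (E i))) (dual i))"
  define b where "b = (\<Sum>i\<in>UNIV. B (br (Z (E i)) (dual i)) v)"
  define c where "c = (\<Sum>i\<in>UNIV. B (br (dual i) v) (Z (E i)))"
  have "trace_map (\<lambda>p. nabla v (Z p)) = (a - b + c) / 2"
    unfolding trace_map_eq_sum_dual nabla_koszul a_def b_def c_def by (rule sum_diff_add_divide_2)
  moreover have "a = trace_map (\<lambda>p. br v (Z p))"
    by (simp add: a_def trace_map_eq_sum_dual)
  moreover have "trace_map (\<lambda>p. br v (Z p)) = 0"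
    by (rule trace_map_lowering_zero)
      (rule linear_compose[OF Z(1) linear_bracket_right, unfolded o_def], blast intro: bracket_C_right Z(3))
  moreover have "b = - b"
  proof -
    have "b = (\<Sum>i\<in>UNIV. B (br (E i) (Z (dual i))) v)"
      unfolding b_def using sum_dual_selfadjoint[OF bilinear_B_bracket Z(1) Z(2)] by simp
    also have "\<dots> = (\<Sum>i\<in>UNIV. B (br (dual i) (Z (E i))) v)"
      using sum_dual_swap[OF bilinear_compose[OF bilinear_B_bracket linear_id Z(1)]] by simp
    finally show ?thesis
      by (simp add: b_def bracket_antisym[of "dual _"] bilinear_lneg[OF B_bilinear] sum_negf)
  qed
  moreover have "c = (\<Sum>i\<in>UNIV. B (dual i) (Z (br (E i) v)))"
    unfolding c_def
    using sum_dual_swap[OF bilinear_compose[OF B_bilinear linear_id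
          linear_compose[OF linear_bracket_left Z(1), unfolded o_def]]]
    by (simp add: B_sym Z(2))
  moreover have "\<dots> = trace_map (\<lambda>p. Z (br p v))"
    by (simp add: trace_map_eq_sum_dual B_sym)
  moreover have "trace_map (\<lambda>p. Z (br p v)) = 0"
    by (rule trace_map_lowering_zero)
      (rule linear_compose[OF linear_bracket_left Z(1), unfolded o_def], blast intro: bracket_C_left Z(3))
  ultimately show ?thesis by simp
qed

lemma trace_map_nabla_left: "trace_map (\<lambda>p. nabla p w) = 0"
  using trace_map_nabla_selfadjoint_left[OF linear_id[unfolded id_def], of w] by simp

lemma trace_map_K_K_fst_zero: "trace_map (\<lambda>x. K (K x z) y) = 0"
proof -
  have "trace_map (\<lambda>x. K (K x z) y) = trace_map (\<lambda>x. B_adjoint (br y) (B_adjoint (br z) x))"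
    by (simp add: K_def)
  also have "\<dots> = trace_map (\<lambda>x. B_adjoint (B_adjoint (br z)) (br y x))"
    by (rule trace_map_adjoint_comp[OF linear_bracket_right linear_B_adjoint])
  also have "\<dots> = trace_map (\<lambda>x. br z (br y x))"
    by (simp add: B_adjoint_adjoint[OF linear_bracket_right])
  finally show ?thesis using bracket_bracket_trace_zero(3) by simp
qed

lemma trace_map_K_bracket_fst: "trace_map (\<lambda>x. K (br x z) y) = - trace_map (\<lambda>x. br y (K x z))"
proof -
  have "K (br x z) y = - B_adjoint (br y) (br z x)" for x
    by (simp add: K_def bracket_antisym[of _ z] linear_neg[OF linear_B_adjoint])
  then have "trace_map (\<lambda>x. K (br x z) y) = - trace_map (\<lambda>x. B_adjoint (br y) (br z x))"
    by (simp add: trace_map_neg)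
  also have "trace_map (\<lambda>x. B_adjoint (br y) (br z x)) = trace_map (\<lambda>x. B_adjoint (br z) (br y x))"
    by (rule trace_map_adjoint_comp[OF linear_bracket_right linear_bracket_right])
  also have "\<dots> = trace_map (\<lambda>x. br y (K x z))"
    unfolding K_def by (rule trace_map_comp_commute[OF linear_B_adjoint linear_bracket_right])
  finally show ?thesis .
qed

lemma trace_map_K_K_snd: "trace_map (\<lambda>x. K (K z x) y) = - trace_map (\<lambda>x. br y (K z x))"
proof -
  have "trace_map (\<lambda>x. K (K z x) y) = trace_map (\<lambda>x. B_adjoint (K z) (br y x))"
    unfolding K_def[of "K z _"] by (rule trace_map_adjoint_comp[OF linear_bracket_right linear_K_right])
  also have "\<dots> = - trace_map (\<lambda>x. K z (br y x))"
    by (simp add: B_adjoint_K trace_map_neg)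
  also have "trace_map (\<lambda>x. K z (br y x)) = trace_map (\<lambda>x. br y (K z x))"
    by (rule trace_map_comp_commute[OF linear_K_right linear_bracket_right])
  finally show ?thesis .
qed

lemma trace_map_K_K_eq_K_bracket: "trace_map (\<lambda>x. K y (K x z)) = trace_map (\<lambda>x. K y (br x z))"
proof -
  have "trace_map (\<lambda>x. K y (K x z)) = trace_map (\<lambda>x. B_adjoint (br z) (K y x))"
    unfolding K_def[of _ z] by (rule trace_map_comp_commute[OF linear_K_right linear_B_adjoint])
  also have "\<dots> = trace_map (\<lambda>x. B_adjoint (K y) (br z x))"
    by (rule trace_map_adjoint_comp[OF linear_bracket_right linear_K_right])
  also have "\<dots> = trace_map (\<lambda>x. K y (br x z))"
    by (simp add: B_adjoint_K bracket_antisym[of _ z] linear_neg[OF linear_K_right])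
  finally show ?thesis .
qed

lemma trace_map_K_bracket_snd: "trace_map (\<lambda>x. K z (br x y)) = - trace_map (\<lambda>x. br y (K z x))"
proof -
  have "trace_map (\<lambda>x. K z (br x y)) = - trace_map (\<lambda>x. K z (br y x))"
    by (simp add: bracket_antisym[of _ y] linear_neg[OF linear_K_right] trace_map_neg)
  also have "trace_map (\<lambda>x. K z (br y x)) = trace_map (\<lambda>x. br y (K z x))"
    by (rule trace_map_comp_commute[OF linear_K_right linear_bracket_right])
  finally show ?thesis .
qed

definition ricci :: "real^'n \<Rightarrow> real^'n \<Rightarrow> real" where
  "ricci y z = trace_map (\<lambda>x. nabla x (nabla y z) - nabla y (nabla x z) - nabla (br x y) z)"

lemma nabla_nabla_expand:
  "nabla y (nabla x z) = (1/4) *\<^sub>R (br y (br x z) - br y (K x z) - br y (K z x)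
     - K y (br x z) + K y (K x z) + K y (K z x) - K (br x z) y + K (K x z) y + K (K z x) y)"
  unfolding nabla_def
  by (simp add: bilinear_rmul[OF bracket_bilinear] bilinear_rsub[OF bracket_bilinear]
      bilinear_rmul[OF bilinear_K] bilinear_rsub[OF bilinear_K] bilinear_lmul[OF bilinear_K]
      bilinear_lsub[OF bilinear_K] bilinear_radd[OF bracket_bilinear] bilinear_radd[OF bilinear_K]
      bilinear_ladd[OF bilinear_K] algebra_simps)

text \<open>In the usual notation, with \<open>f\<^sub>i\<close> the \<open>B\<close>-dual basis of \<open>e\<^sub>i\<close>:
  \<open>ric(y,z) = 1/4 \<Sum> <[e\<^sub>i,e\<^sub>j],y> <[f\<^sub>i,f\<^sub>j],z> - 1/2 \<Sum> <[y,e\<^sub>i],[z,f\<^sub>i]>\<close>.\<close>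

lemma ricci_formula:
  "ricci y z = -(1/4) * trace_map (\<lambda>x. K y (K z x))
     - (1/2) * trace_map (\<lambda>x. B_adjoint (br z) (br y x))"
proof -
  have K_bracket: "K (br x y) z = - B_adjoint (br z) (br y x)" for x
    by (simp add: K_def bracket_antisym[of _ y] linear_neg[OF linear_B_adjoint])
  have "ricci y z = trace_map (\<lambda>x. nabla x (nabla y z)) - trace_map (\<lambda>x. nabla y (nabla x z))
      - trace_map (\<lambda>x. nabla (br x y) z)"
    by (simp only: ricci_def trace_map_diff)
  also have "\<dots> = 0
      - (1/4) * (trace_map (\<lambda>x. br y (br x z)) - trace_map (\<lambda>x. br y (K x z))
        - trace_map (\<lambda>x. br y (K z x)) - trace_map (\<lambda>x. K y (br x z))
        + trace_map (\<lambda>x. K y (K x z)) + trace_map (\<lambda>x. K y (K z x))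
        - trace_map (\<lambda>x. K (br x z) y) + trace_map (\<lambda>x. K (K x z) y) + trace_map (\<lambda>x. K (K z x) y))
      - (1/2) * (trace_map (\<lambda>x. br (br x y) z) - trace_map (\<lambda>x. K (br x y) z)
        - trace_map (\<lambda>x. K z (br x y)))"
    unfolding trace_map_nabla_left
    by (simp only: nabla_nabla_expand nabla_def[of "br _ y"]
        trace_map_scaleR trace_map_add trace_map_diff)
  finally show ?thesis
    unfolding bracket_bracket_trace_zero(1,2) trace_map_K_K_fst_zero trace_map_K_bracket_fst
      trace_map_K_K_snd trace_map_K_K_eq_K_bracket trace_map_K_bracket_snd K_bracket trace_map_neg
    by (simp add: algebra_simps)
qed

lemma trace_map_adjoint_bracket_sum:
  "trace_map (\<lambda>x. B_adjoint (br z) (br y x)) = (\<Sum>i\<in>UNIV. B (br y (E i)) (br z (dual i)))"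
  by (simp add: trace_map_eq_sum_dual B_adjoint_left[OF linear_bracket_right])

lemma trace_map_K_K_sum:
  "trace_map (\<lambda>x. K y (K z x)) =
     (\<Sum>i\<in>UNIV. \<Sum>j\<in>UNIV. B z (br (E i) (E j)) * B y (br (dual j) (dual i)))"
proof -
  have K_expansion: "K z a = (\<Sum>j\<in>UNIV. B z (br a (E j)) *\<^sub>R dual j)" for a
    by (simp add: K_def B_adjoint_def B_sym)
  have "trace_map (\<lambda>x. K y (K z x)) = (\<Sum>i\<in>UNIV. B y (br (K z (E i)) (dual i)))"
    by (simp add: trace_map_eq_sum_dual B_K_left)
  also have "\<dots> = (\<Sum>i\<in>UNIV. \<Sum>j\<in>UNIV. B z (br (E i) (E j)) * B y (br (dual j) (dual i)))"
    unfolding K_expansion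
    by (simp add: linear_sum[OF linear_bracket_left] linear_scale[OF linear_bracket_left] o_def
        bilinear_sum_scaleR_right[OF B_bilinear])
  finally show ?thesis .
qed

lemma sum_trace_map_K_K_derivation:
  assumes S: "linear S" "\<And>a b. S (br a b) = br (S a) b + br a (S b)"
  shows "(\<Sum>k\<in>UNIV. trace_map (\<lambda>x. K (S (E k)) (K (dual k) x)))
    = - 2 * (\<Sum>k\<in>UNIV. trace_map (\<lambda>x. B_adjoint (br (dual k)) (br (S (E k)) x)))"
proof -
  let ?X = "\<Sum>i\<in>UNIV. \<Sum>j\<in>UNIV. B (br (S (E i)) (E j)) (br (dual i) (dual j))"
  let ?b = "\<lambda>i j. br (dual j) (dual i)"
  have "(\<Sum>k\<in>UNIV. trace_map (\<lambda>x. K (S (E k)) (K (dual k) x)))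
      = (\<Sum>k\<in>UNIV. \<Sum>i\<in>UNIV. \<Sum>j\<in>UNIV. br (E i) (E j) $ k * B (S (E k)) (?b i j))"
    by (simp add: trace_map_K_K_sum B_dual_left)
  also have "\<dots> = (\<Sum>i\<in>UNIV. \<Sum>j\<in>UNIV. \<Sum>k\<in>UNIV. br (E i) (E j) $ k * B (S (E k)) (?b i j))"
    by (subst sum.swap, subst (2) sum.swap, rule refl)
  also have "\<dots> = (\<Sum>i\<in>UNIV. \<Sum>j\<in>UNIV. B (S (br (E i) (E j))) (?b i j))"
  proof (intro sum.cong refl)
    fix i j
    show "(\<Sum>k\<in>UNIV. br (E i) (E j) $ k * B (S (E k)) (?b i j)) = B (S (br (E i) (E j))) (?b i j)"
      by (subst (2) linear_basis_expansion[OF S(1)]) (simp add: bilinear_sum_scaleR_left[OF B_bilinear])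
  qed
  also have "\<dots> = (\<Sum>i\<in>UNIV. \<Sum>j\<in>UNIV. B (br (S (E i)) (E j)) (?b i j))
      + (\<Sum>i\<in>UNIV. \<Sum>j\<in>UNIV. B (br (E i) (S (E j))) (?b i j))"
    by (simp add: S(2) bilinear_ladd[OF B_bilinear] sum.distrib)
  also have "(\<Sum>i\<in>UNIV. \<Sum>j\<in>UNIV. B (br (S (E i)) (E j)) (?b i j)) = - ?X"
  proof -
    have "B (br (S (E i)) (E j)) (?b i j) = - B (br (S (E i)) (E j)) (br (dual i) (dual j))" for i j
      using bracket_antisym[of "dual j" "dual i"] by (simp add: bilinear_rneg[OF B_bilinear])
    then show ?thesis by (simp add: sum_negf)
  qed
  also have "(\<Sum>i\<in>UNIV. \<Sum>j\<in>UNIV. B (br (E i) (S (E j))) (?b i j)) = - ?X"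
  proof -
    have "B (br (E i) (S (E j))) (?b i j) = - B (br (S (E j)) (E i)) (br (dual j) (dual i))" for i j
      using bracket_antisym[of "E i" "S (E j)"] by (simp add: bilinear_lneg[OF B_bilinear])
    then show ?thesis by (subst sum.swap) (simp add: sum_negf)
  qed
  finally show ?thesis by (simp add: trace_map_adjoint_bracket_sum)
qed

lemma sum_ricci_derivation_zero:
  assumes "linear S" "\<And>a b. S (br a b) = br (S a) b + br a (S b)"
  shows "(\<Sum>k\<in>UNIV. ricci (S (E k)) (dual k)) = 0"
proof -
  have "(\<Sum>k\<in>UNIV. ricci (S (E k)) (dual k)) =
      -(1/4) * (\<Sum>k\<in>UNIV. trace_map (\<lambda>x. K (S (E k)) (K (dual k) x)))
      - (1/2) * (\<Sum>k\<in>UNIV. trace_map (\<lambda>x. B_adjoint (br (dual k)) (br (S (E k)) x)))"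
    by (simp add: ricci_formula sum_subtractf sum_distrib_left)
  then show ?thesis by (simp add: sum_trace_map_K_K_derivation[OF assms])
qed

lemma ricci_form_eq_ricci: "ricci_form UNIV br B y z = ricci y z"
  unfolding ricci_form_def curvature_def levi_civita_eq_nabla ricci_def
  by (intro trace_on_UNIV linear_compose_sub linear_nabla_left
      linear_compose[OF linear_nabla_left linear_nabla_right, unfolded o_def]
      linear_compose[OF linear_bracket_left linear_nabla_left, unfolded o_def])

lemma linear_on_ricci: "linear_on UNIV (ricci y)"
  unfolding linear_on_def ricci_formula trace_map_K_K_sum trace_map_adjoint_bracket_sum
  by (simp add: bilinear_ladd[OF B_bilinear] bilinear_lmul[OF B_bilinear]
      bilinear_radd[OF B_bilinear] bilinear_rmul[OF B_bilinear] bilinear_radd[OF bracket_bilinear] bilinear_rmul[OF bracket_bilinear]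
      bilinear_ladd[OF bracket_bilinear] bilinear_lmul[OF bracket_bilinear]
      sum.distrib sum_distrib_left algebra_simps)

lemma B_ricci_op: "B (ricci_op UNIV br B v) z = ricci v z"
proof -
  obtain W where W: "\<forall>x. B W x = ricci v x"
    using lie_metric_represents[OF subspace_UNIV metric linear_on_ricci] by blast
  have "ricci_op UNIV br B v = W"
    unfolding ricci_op_def ricci_form_eq_ricci
    by (rule lie_metric_the_eq[OF metric subspace_UNIV]) (use W in auto)
  then show ?thesis using W by simp
qed

lemma derivation_trace_identity:
  assumes ricci_op_eq: "\<forall>v. ricci_op UNIV br B v = lam *\<^sub>R v + D *v v"
    and S: "is_derivation br S"
  shows "lam * trace S + trace (D ** S) = 0"
proof -
  have "(\<Sum>k\<in>UNIV. ricci (S *v E k) (dual k)) = 0"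
    using S by (intro sum_ricci_derivation_zero) (auto simp: is_derivation_def)
  then have "trace_map (\<lambda>x. lam *\<^sub>R (S *v x) + D *v (S *v x)) = 0"
    using ricci_op_eq by (simp add: trace_map_eq_sum_dual flip: B_ricci_op)
  then show ?thesis
    by (simp add: trace_map_add trace_map_scaleR matrix_vector_mul_assoc trace_map_matrix)
qed

end

section \<open>The semidirect extension by self-adjoint derivations\<close>

lemma lower_central_sd_bracket:
  "lower_central (UNIV \<times> {0}) (sd_bracket br) k = lower_central UNIV br k \<times> {0::real^'n^'n}"
proof (induction k)
  case (Suc k)
  let ?f = "\<lambda>v::real^'n. (v, 0::real^'n^'n)"
  have "linear ?f" by (intro linearI) (simp_all add: zero_prod_def)
  moreover have "{sd_bracket br x y |x y. x \<in> UNIV \<times> {0} \<and> y \<in> lower_central UNIV br k \<times> {0}}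
      = ?f ` {br x y |x y. x \<in> UNIV \<and> y \<in> lower_central UNIV br k}"
    by (auto simp: sd_bracket_def)
  ultimately have "lower_central (UNIV \<times> {0}) (sd_bracket br) (Suc k)
      = ?f ` lower_central UNIV br (Suc k)"
    by (simp only: lower_central.simps Suc real_vector.linear_span_image)
  then show ?case by auto
qed simp

lemma nilpotent_sd_bracket:
  "nilpotent_lie UNIV br \<Longrightarrow> nilpotent_lie (UNIV \<times> {0 :: real^'n^'n}) (sd_bracket br)"
  unfolding nilpotent_lie_def lower_central_sd_bracket by (auto simp: zero_prod_def)

locale einstein_semidirect = metric_nilpotent_lie B br
  for B :: "real^'n \<Rightarrow> real^'n \<Rightarrow> real" and br +
  fixes lam :: real and D :: "real^'n^'n" and A :: "(real^'n^'n) set"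
  assumes lam_nonzero: "lam \<noteq> 0"
    and ricci_op_eq: "\<forall>v. ricci_op UNIV br B v = lam *\<^sub>R v + D *v v"
    and subspace_A: "subspace A"
    and A_commutator: "\<forall>X\<in>A. \<forall>Y\<in>A. X ** Y - Y ** X \<in> A"
    and A_derivation: "\<forall>X\<in>A. is_derivation br X"
    and A_self_adjoint: "\<forall>X\<in>A. self_adjoint_wrt B X"
    and D_in_A: "D \<in> A"
    and A_trace_nondegenerate: "\<forall>X\<in>A. (\<forall>Y\<in>A. trace (X ** Y) = 0) \<longrightarrow> X = 0"
begin

lemma A_self_adjointD: "X \<in> A \<Longrightarrow> B (X *v x) y = B x (X *v y)"
  using A_self_adjoint unfolding self_adjoint_wrt_def by blast

lemma A_derivationD: "X \<in> A \<Longrightarrow> X *v br a b = br (X *v a) b + br a (X *v b)"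
  using A_derivation unfolding is_derivation_def by blast

lemma A_preserves_C: "X \<in> A \<Longrightarrow> x \<in> C k \<Longrightarrow> X *v x \<in> C k"
  using A_derivation derivation_preserves_C by blast

lemma A_commute: "X \<in> A \<Longrightarrow> Y \<in> A \<Longrightarrow> X ** Y = Y ** X"
  using self_adjoint_commutator_imp_commute A_self_adjoint A_commutator by blast

lemma zero_in_A: "0 \<in> A"
  using subspace_A by (rule subspace_0)

definition trace_form :: "real^'n^'n \<Rightarrow> real^'n^'n \<Rightarrow> real" where
  "trace_form X Y = -(1/lam) * trace (X ** Y)"

lemma bilinear_trace_form: "bilinear trace_form"
  unfolding bilinear_def trace_form_def trace_matrix_mult_sum
  by (intro conjI allI linearI) (simp_all add: sum.distrib sum_distrib_left algebra_simps)

lemma lie_metric_trace_form: "lie_metric A trace_form"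
  unfolding lie_metric_def
  using bilinear_trace_form A_trace_nondegenerate lam_nonzero
  by (simp add: trace_form_def trace_mul_sym[of _ "_ :: real^'n^'n"])

definition sigma :: "real^'n \<Rightarrow> real^'n \<Rightarrow> real^'n^'n" where
  "sigma u v = (SOME S. S \<in> A \<and> (\<forall>Z\<in>A. trace_form S Z = B (Z *v u) v))"

lemma sigma_exists: "\<exists>S. S \<in> A \<and> (\<forall>Z\<in>A. trace_form S Z = B (Z *v u) v)"
proof -
  have "linear_on A (\<lambda>Z. B (Z *v u) v)"
    by (simp add: linear_on_def matrix_vector_mult_add_rdistrib scaleR_matrix_vector_assoc[symmetric]
        bilinear_ladd[OF B_bilinear] bilinear_lmul[OF B_bilinear])
  then show ?thesis
    using lie_metric_represents[OF subspace_A lie_metric_trace_form] by blast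
qed

lemma sigma_in_A: "sigma u v \<in> A"
  and trace_form_sigma: "Z \<in> A \<Longrightarrow> trace_form (sigma u v) Z = B (Z *v u) v"
  using someI_ex[OF sigma_exists[of u v]] unfolding sigma_def[symmetric] by auto

lemma sigma_unique:
  "S \<in> A \<Longrightarrow> (\<And>Z. Z \<in> A \<Longrightarrow> trace_form S Z = B (Z *v u) v) \<Longrightarrow> sigma u v = S"
  by (rule lie_metric_eqI[OF lie_metric_trace_form subspace_A sigma_in_A])
    (auto simp: trace_form_sigma)

lemma bilinear_sigma: "bilinear sigma"
  unfolding bilinear_def
proof (intro allI conjI linearI)
  fix x y z :: "real^'n" and c :: real
  show "sigma x (y + z) = sigma x y + sigma x z"
    by (rule sigma_unique) (auto simp: subspace_A subspace_add sigma_in_A bilinear_ladd[OF bilinear_trace_form]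
        trace_form_sigma bilinear_radd[OF B_bilinear])
  show "sigma x (c *\<^sub>R y) = c *\<^sub>R sigma x y"
    by (rule sigma_unique) (auto simp: subspace_A subspace_scale sigma_in_A bilinear_lmul[OF bilinear_trace_form]
        trace_form_sigma bilinear_rmul[OF B_bilinear])
  show "sigma (y + z) x = sigma y x + sigma z x"
    by (rule sigma_unique) (auto simp: subspace_A subspace_add sigma_in_A bilinear_ladd[OF bilinear_trace_form]
        trace_form_sigma bilinear_ladd[OF B_bilinear] matrix_vector_right_distrib)
  show "sigma (c *\<^sub>R y) x = c *\<^sub>R sigma y x"
    by (rule sigma_unique) (auto simp: subspace_A subspace_scale sigma_in_A bilinear_lmul[OF bilinear_trace_form]
        trace_form_sigma bilinear_lmul[OF B_bilinear] matrix_scaleR_vector_ac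
        scaleR_matrix_vector_assoc[symmetric])
qed

text \<open>Pairing \<open>sigma v w\<close> with \<open>D\<close> and applying the trace identity to the derivation
  \<open>sigma v w\<close> determines its trace; this is where \<open>D \<in> A\<close> and the normalisation
  \<open>-1/\<lambda>\<close> of the trace form enter.\<close>

lemma trace_sigma: "trace (sigma v w) = B (D *v v) w"
proof -
  have "lam * trace (sigma v w) + trace (D ** sigma v w) = 0"
    using derivation_trace_identity[OF ricci_op_eq] A_derivation sigma_in_A by blast
  moreover have "trace_form (sigma v w) D = B (D *v v) w"
    by (rule trace_form_sigma[OF D_in_A])
  ultimately have "trace (sigma v w ** D) + lam * trace (sigma v w) = 0"
      "- trace (sigma v w ** D) = lam * B (D *v v) w"
    using lam_nonzero by (simp_all add: trace_form_def trace_mul_sym[of D] field_simps)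
  then have "lam * trace (sigma v w) = lam * B (D *v v) w" by linarith
  then show ?thesis using lam_nonzero by simp
qed

abbreviation Vt :: "((real^'n) \<times> (real^'n^'n)) set" where
  "Vt \<equiv> UNIV \<times> A"

lemma subspace_Vt: "subspace Vt"
  using subspace_A by (simp add: subspace_Times subspace_UNIV)

lemma sd_bracket_in_Vt: "P \<in> Vt \<Longrightarrow> Q \<in> Vt \<Longrightarrow> sd_bracket br P Q \<in> Vt"
  using A_commutator by (auto simp: sd_bracket_def)

lemma sd_bracket_pair:
  "X \<in> A \<Longrightarrow> Y \<in> A \<Longrightarrow> sd_bracket br (u, X) (v, Y) = (br u v + X *v v - Y *v u, 0)"
  by (simp add: sd_bracket_def A_commute)

lemma sd_metric_pair: "sd_metric B lam (u, X) (v, Y) = B u v + trace_form X Y"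
  by (simp add: sd_metric_def trace_form_def)

lemma bilinear_sd_bracket: "bilinear (sd_bracket br)"
  unfolding bilinear_def sd_bracket_def
  by (intro allI conjI linearI)
    (simp_all add: bilinear_radd[OF bracket_bilinear] bilinear_rmul[OF bracket_bilinear]
      bilinear_ladd[OF bracket_bilinear] bilinear_lmul[OF bracket_bilinear]
      matrix_vector_right_distrib matrix_vector_mult_add_rdistrib scaleR_matrix_vector_assoc
      matrix_scaleR_vector_ac matrix_add_rdistrib scalar_matrix_assoc[symmetric] matrix_add_ldistrib
      matrix_scalar_ac algebra_simps)

lemma linear_sd_bracket_left: "linear (\<lambda>P. sd_bracket br P Q)"
  using bilinear_sd_bracket unfolding bilinear_def by blast

lemma bilinear_sd_metric: "bilinear (sd_metric B lam)"
  unfolding bilinear_def sd_metric_def trace_matrix_mult_sum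
  by (intro conjI allI linearI)
    (simp_all add: bilinear_ladd[OF B_bilinear] bilinear_lmul[OF B_bilinear]
      bilinear_radd[OF B_bilinear] bilinear_rmul[OF B_bilinear]
      sum.distrib sum_distrib_left algebra_simps)

lemma lie_metric_sd: "lie_metric Vt (sd_metric B lam)"
  unfolding lie_metric_def
proof (intro conjI ballI impI)
  show "bilinear (sd_metric B lam)" by (rule bilinear_sd_metric)
  show "sd_metric B lam P Q = sd_metric B lam Q P" for P Q
    unfolding sd_metric_def using B_sym trace_mul_sym[of "snd P" "snd Q"] by simp
next
  fix P assume "P \<in> Vt" and P0: "\<forall>Q\<in>Vt. sd_metric B lam P Q = 0"
  then obtain a M where P: "P = (a, M)" "M \<in> A" by auto
  have "B a b = 0" for b
    using P0[rule_format, of "(b, 0)"] P zero_in_A by (simp add: sd_metric_def trace_def)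
  then have "a = 0" using B_nondegenerate by blast
  moreover have "trace_form M N = 0" if "N \<in> A" for N
    using P0[rule_format, of "(0, N)"] P that by (simp add: sd_metric_pair bilinear_rzero[OF B_bilinear])
  then have "M = 0" using lie_metric_trace_form P(2) unfolding lie_metric_def by blast
  ultimately show "P = 0" using P by (simp add: zero_prod_def)
qed

definition nabla_sd ::
    "(real^'n) \<times> (real^'n^'n) \<Rightarrow> (real^'n) \<times> (real^'n^'n) \<Rightarrow> (real^'n) \<times> (real^'n^'n)" where
  "nabla_sd P Q = (nabla (fst P) (fst Q) - snd Q *v fst P, sigma (fst P) (fst Q))"

lemma nabla_sd_in_Vt: "nabla_sd P Q \<in> Vt"
  by (simp add: nabla_sd_def sigma_in_A)

lemma nabla_sd_koszul:
  assumes "P \<in> Vt" "Q \<in> Vt" "R \<in> Vt"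
  shows "sd_metric B lam (nabla_sd P Q) R = (sd_metric B lam (sd_bracket br P Q) R
     - sd_metric B lam (sd_bracket br Q R) P + sd_metric B lam (sd_bracket br R P) Q) / 2"
proof -
  obtain u X where P: "P = (u, X)" "X \<in> A" using assms(1) by auto
  obtain v Y where Q: "Q = (v, Y)" "Y \<in> A" using assms(2) by auto
  obtain w Z where R: "R = (w, Z)" "Z \<in> A" using assms(3) by auto
  have trace_form_0: "trace_form 0 M = 0" for M by (simp add: trace_form_def trace_def)
  have self_adj: "B (X *v v) w = B (X *v w) v" "B (Y *v w) u = B (Y *v u) w" "B (Z *v v) u = B (Z *v u) v"
    using A_self_adjointD[OF P(2), of v w] A_self_adjointD[OF Q(2), of w u]
      A_self_adjointD[OF R(2), of v u] B_sym by metis+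
  show ?thesis
    using P Q R self_adj
    by (simp add: nabla_sd_def sd_metric_pair trace_form_sigma sd_bracket_pair trace_form_0 nabla_koszul
        bilinear_ladd[OF B_bilinear] bilinear_lsub[OF B_bilinear] field_simps)
qed

lemma levi_civita_sd:
  "P \<in> Vt \<Longrightarrow> Q \<in> Vt \<Longrightarrow> levi_civita Vt (sd_bracket br) (sd_metric B lam) P Q = nabla_sd P Q"
  unfolding levi_civita_def
  by (rule lie_metric_the_eq[OF lie_metric_sd subspace_Vt nabla_sd_in_Vt]) (rule nabla_sd_koszul)

lemma linear_nabla_sd_left: "linear (\<lambda>P. nabla_sd P Q)"
  by (intro linearI)
    (simp_all add: nabla_sd_def bilinear_ladd[OF bilinear_nabla] bilinear_lmul[OF bilinear_nabla]
      bilinear_ladd[OF bilinear_sigma] bilinear_lmul[OF bilinear_sigma] matrix_vector_right_distrib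
      matrix_scaleR_vector_ac scaleR_matrix_vector_assoc algebra_simps)

lemma linear_nabla_sd_right: "linear (nabla_sd P)"
  by (intro linearI)
    (simp_all add: nabla_sd_def bilinear_radd[OF bilinear_nabla] bilinear_rmul[OF bilinear_nabla]
      bilinear_radd[OF bilinear_sigma] bilinear_rmul[OF bilinear_sigma] matrix_vector_mult_add_rdistrib
      scaleR_matrix_vector_assoc algebra_simps)

definition curvature_sd where
  "curvature_sd P Q R = nabla_sd P (nabla_sd Q R) - nabla_sd Q (nabla_sd P R) - nabla_sd (sd_bracket br P Q) R"

lemma curvature_sd_eq:
  "P \<in> Vt \<Longrightarrow> Q \<in> Vt \<Longrightarrow> R \<in> Vt \<Longrightarrow>
    curvature Vt (sd_bracket br) (sd_metric B lam) P Q R = curvature_sd P Q R"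
  unfolding curvature_def curvature_sd_def
  by (simp add: levi_civita_sd nabla_sd_in_Vt sd_bracket_in_Vt)

lemma curvature_sd_in_Vt: "curvature_sd P Q R \<in> Vt"
  unfolding curvature_sd_def using nabla_sd_in_Vt subspace_Vt by (intro subspace_diff) auto

lemma linear_curvature_sd: "linear (\<lambda>P. curvature_sd P Q R)"
  unfolding curvature_sd_def
  by (intro linear_compose_sub linear_compose[OF linear_nabla_sd_left linear_nabla_sd_right, unfolded o_def]
      linear_compose[OF linear_sd_bracket_left linear_nabla_sd_left, unfolded o_def] linear_nabla_sd_left)

lemma curvature_sd_fst:
  "fst (curvature_sd (p, 0) (v, Y) (w, Z)) =
     (nabla p (nabla v w) - nabla v (nabla p w) - nabla (br p v) w) - nabla p (Z *v v) - sigma v w *v p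
     + nabla v (Z *v p) + sigma p w *v v + nabla (Y *v p) w + Z *v br p v - Z *v (Y *v p)"
  by (simp add: curvature_sd_def nabla_sd_def sd_bracket_def bilinear_rsub[OF bilinear_nabla]
      bilinear_lsub[OF bilinear_nabla] bilinear_rsub[OF bilinear_sigma] bilinear_lsub[OF bilinear_sigma]
      matrix_vector_right_distrib matrix_vector_mult_diff_rdistrib matrix_vector_mult_diff_distrib
      algebra_simps)

lemma curvature_sd_snd:
  "X \<in> A \<Longrightarrow> Y \<in> A \<Longrightarrow> snd (curvature_sd (0, X) (v, Y) (w, Z)) = - sigma (X *v v) w"
  by (simp add: curvature_sd_def nabla_sd_def sd_bracket_def A_commute bilinear_lzero[OF bilinear_nabla]
      bilinear_rzero[OF bilinear_nabla] bilinear_lzero[OF bilinear_sigma] bilinear_rzero[OF bilinear_sigma]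
      bilinear_lzero[OF bracket_bilinear])

text \<open>Of the eight terms, the Ricci term of \<open>g\<close> contributes \<open>\<lambda><v,w> + <D v,w>\<close> and
  \<open>sigma v w *v p\<close> contributes \<open>-tr (sigma v w) = -<D v,w>\<close>; the covariant-derivative terms
  and the term lowering the central series are traceless. The cross term through \<open>A\<close> is
  cancelled by the \<open>A\<close>-block in \<open>ricci_form_sd\<close>.\<close>

lemma trace_map_curvature_sd_fst:
  assumes Y: "Y \<in> A" and Z: "Z \<in> A"
  shows "trace_map (\<lambda>p. fst (curvature_sd (p, 0) (v, Y) (w, Z))) =
     lam * B v w - trace (Z ** Y) + trace_on A (\<lambda>X. sigma (X *v v) w)"
proof -
  have ricci_g: "trace_map (\<lambda>p. nabla p (nabla v w) - nabla v (nabla p w) - nabla (br p v) w)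
      = lam * B v w + B (D *v v) w"
    using B_ricci_op[of v w] ricci_op_eq
    by (simp add: ricci_def bilinear_ladd[OF B_bilinear] bilinear_lmul[OF B_bilinear])
  have sigma_cross: "trace_map (\<lambda>p. sigma p w *v v) = trace_on A (\<lambda>X. sigma (X *v v) w)"
  proof (rule trace_map_comp_through_subspace[OF subspace_A _ sigma_in_A])
    show "linear (\<lambda>p. sigma p w)" using bilinear_sigma unfolding bilinear_def by blast
    show "linear_on A (\<lambda>X. X *v v)"
      by (simp add: linear_on_def matrix_vector_mult_add_rdistrib scaleR_matrix_vector_assoc)
  qed
  have Z_trace: "trace_map (\<lambda>p. nabla v (Z *v p)) = 0"
    by (rule trace_map_nabla_selfadjoint_right) (auto intro: A_self_adjointD[OF Z] A_preserves_C[OF Z])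
  have Y_trace: "trace_map (\<lambda>p. nabla (Y *v p) w) = 0"
    by (rule trace_map_nabla_selfadjoint_left) (auto intro: A_self_adjointD[OF Y] A_preserves_C[OF Y])
  have lowering: "trace_map (\<lambda>p. Z *v br p v) = 0"
    by (rule trace_map_lowering_zero[OF linear_compose[OF linear_bracket_left matrix_vector_mul_linear,
          unfolded o_def]])
      (use A_preserves_C[OF Z] bracket_C_left in blast)
  have "trace_map (\<lambda>p. fst (curvature_sd (p, 0) (v, Y) (w, Z))) =
     trace_map (\<lambda>p. nabla p (nabla v w) - nabla v (nabla p w) - nabla (br p v) w)
     - trace_map (\<lambda>p. nabla p (Z *v v)) - trace_map (\<lambda>p. sigma v w *v p)
     + trace_map (\<lambda>p. nabla v (Z *v p)) + trace_map (\<lambda>p. sigma p w *v v)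
     + trace_map (\<lambda>p. nabla (Y *v p) w) + trace_map (\<lambda>p. Z *v br p v) - trace_map (\<lambda>p. Z *v (Y *v p))"
    by (simp only: curvature_sd_fst trace_map_add trace_map_diff)
  then show ?thesis
    by (simp add: ricci_g trace_map_nabla_left trace_map_matrix trace_sigma Z_trace sigma_cross Y_trace
        lowering matrix_vector_mul_assoc)
qed

lemma ricci_form_sd:
  assumes Y: "Y \<in> A" and Z: "Z \<in> A"
  shows "ricci_form Vt (sd_bracket br) (sd_metric B lam) (v, Y) (w, Z) = lam * B v w - trace (Z ** Y)"
proof -
  have "ricci_form Vt (sd_bracket br) (sd_metric B lam) (v, Y) (w, Z)
      = trace_on Vt (\<lambda>P. curvature_sd P (v, Y) (w, Z))"
    unfolding ricci_form_def using Y Z by (intro trace_on_cong subspace_Vt) (simp add: curvature_sd_eq)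
  also have "\<dots> = trace_map (\<lambda>p. fst (curvature_sd (p, 0) (v, Y) (w, Z)))
      + trace_on A (\<lambda>X. snd (curvature_sd (0, X) (v, Y) (w, Z)))"
    by (rule trace_on_UNIV_Times[OF subspace_A linear_imp_linear_on[OF linear_curvature_sd]
          curvature_sd_in_Vt])
  also have "trace_on A (\<lambda>X. snd (curvature_sd (0, X) (v, Y) (w, Z)))
      = - trace_on A (\<lambda>X. sigma (X *v v) w)"
    using Y sigma_in_A
    by (simp add: trace_on_cong[OF subspace_A curvature_sd_snd] trace_on_neg[OF subspace_A])
  finally show ?thesis by (simp add: trace_map_curvature_sd_fst[OF Y Z])
qed

lemma ricci_op_sd:
  assumes "u \<in> Vt"
  shows "ricci_op Vt (sd_bracket br) (sd_metric B lam) u = lam *\<^sub>R u"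
  unfolding ricci_op_def
proof (rule lie_metric_the_eq[OF lie_metric_sd subspace_Vt])
  show "lam *\<^sub>R u \<in> Vt" using assms subspace_Vt by (simp add: subspace_scale)
  fix Q assume "Q \<in> Vt"
  then show "sd_metric B lam (lam *\<^sub>R u) Q = ricci_form Vt (sd_bracket br) (sd_metric B lam) u Q"
    using assms lam_nonzero
    by (auto simp: ricci_form_sd sd_metric_def bilinear_lmul[OF B_bilinear] scalar_matrix_assoc[symmetric]
        trace_scaleR trace_mul_sym[of "snd u"])
qed

lemma jacobi_sd:
  assumes X: "X \<in> A" and Y: "Y \<in> A" and Z: "Z \<in> A"
  shows "sd_bracket br (u, X) (sd_bracket br (v, Y) (w, Z))
     + sd_bracket br (v, Y) (sd_bracket br (w, Z) (u, X))
     + sd_bracket br (w, Z) (sd_bracket br (u, X) (v, Y)) = 0"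
proof -
  have commute: "X *v (Y *v w) = Y *v (X *v w)" "X *v (Z *v v) = Z *v (X *v v)"
      "Y *v (Z *v u) = Z *v (Y *v u)"
    using A_commute X Y Z by (simp_all add: matrix_vector_mul_assoc)
  have "br u (br v w + Y *v w - Z *v v) + X *v (br v w + Y *v w - Z *v v)
     + (br v (br w u + Z *v u - X *v w) + Y *v (br w u + Z *v u - X *v w))
     + (br w (br u v + X *v v - Y *v u) + Z *v (br u v + X *v v - Y *v u)) = 0"
    using jacobi[of u v w] commute bracket_antisym[of "Y *v w" u] bracket_antisym[of "X *v v" w]
      bracket_antisym[of "Z *v u" v]
    by (simp add: bilinear_radd[OF bracket_bilinear] bilinear_rsub[OF bracket_bilinear]
        matrix_vector_right_distrib matrix_vector_mult_diff_distrib
        A_derivationD[OF X] A_derivationD[OF Y] A_derivationD[OF Z] algebra_simps)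
  then show ?thesis
    using X Y Z zero_in_A by (simp add: sd_bracket_pair zero_prod_def)
qed

lemma lie_algebra_sd: "lie_algebra Vt (sd_bracket br)"
  unfolding lie_algebra_def
proof (intro conjI ballI)
  fix P Q R assume "P \<in> Vt" "Q \<in> Vt" "R \<in> Vt"
  then show "sd_bracket br P (sd_bracket br Q R) + sd_bracket br Q (sd_bracket br R P)
      + sd_bracket br R (sd_bracket br P Q) = 0"
    using jacobi_sd by (cases P, cases Q, cases R) auto
qed (auto simp: subspace_Vt bilinear_sd_bracket sd_bracket_def bracket_self A_commutator
    zero_prod_def)

lemma pseudo_iwasawa_sd:
  "pseudo_iwasawa Vt (sd_bracket br) (sd_metric B lam) (UNIV \<times> {0}) ({0} \<times> A)"
  unfolding pseudo_iwasawa_def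
proof (intro conjI ballI)
  show "subspace (UNIV \<times> {0::real^'n^'n})" "subspace ({0::real^'n} \<times> A)"
    by (intro subspace_Times subspace_UNIV subspace_single_0 subspace_A)+
  show "{x + y |x y. x \<in> UNIV \<times> {0} \<and> y \<in> {0} \<times> A} = Vt"
  proof (intro subset_antisym subsetI)
    fix P assume "P \<in> Vt"
    then have "P = (fst P, 0) + (0, snd P)" "snd P \<in> A" by auto
    then show "P \<in> {x + y |x y. x \<in> UNIV \<times> {0} \<and> y \<in> {0} \<times> A}" by blast
  qed auto
  show "nilpotent_lie (UNIV \<times> {0}) (sd_bracket br)"
    using nilpotent by (rule nilpotent_sd_bracket)
  show "sd_metric B lam (sd_bracket br X P) Q = sd_metric B lam P (sd_bracket br X Q)"
    if "X \<in> {0} \<times> A" "P \<in> Vt" "Q \<in> Vt" for X P Q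
    using that A_self_adjointD
    by (auto simp: sd_bracket_def A_commute sd_metric_def bilinear_lzero[OF bracket_bilinear] trace_def)
qed (use zero_in_A in \<open>auto simp: zero_prod_def sd_metric_def bilinear_rzero[OF B_bilinear] trace_def
      sd_bracket_def A_commute bilinear_lzero[OF bracket_bilinear]\<close>)

end

theorem theorem4p1:
  fixes br :: "real^'n \<Rightarrow> real^'n \<Rightarrow> real^'n"
    and B :: "real^'n \<Rightarrow> real^'n \<Rightarrow> real"
    and lam :: real
    and D :: "real^'n^'n"
    and A :: "(real^'n^'n) set"
  assumes lie: "lie_algebra UNIV br"
    and nil: "nilpotent_lie UNIV br"
    and met: "lie_metric UNIV B"
    and lam: "lam \<noteq> 0"
    and Dder: "is_derivation br D"
    and ric: "\<forall>v. ricci_op UNIV br B v = lam *\<^sub>R v + D *v v"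
    and Asub: "subspace A"
    and Alie: "\<forall>X\<in>A. \<forall>Y\<in>A. X ** Y - Y ** X \<in> A"
    and Ader: "\<forall>X\<in>A. is_derivation br X"
    and Aself: "\<forall>X\<in>A. self_adjoint_wrt B X"
    and DA: "D \<in> A"
    and Anondeg: "\<forall>X\<in>A. (\<forall>Y\<in>A. trace (X ** Y) = 0) \<longrightarrow> X = 0"
  shows "lie_algebra (UNIV \<times> A) (sd_bracket br)
       \<and> lie_metric (UNIV \<times> A) (sd_metric B lam)
       \<and> (\<forall>u\<in>UNIV \<times> A. ricci_op (UNIV \<times> A) (sd_bracket br) (sd_metric B lam) u = lam *\<^sub>R u)
       \<and> pseudo_iwasawa (UNIV \<times> A) (sd_bracket br) (sd_metric B lam) (UNIV \<times> {0}) ({0} \<times> A)"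
proof -
  interpret einstein_semidirect B br lam D A
    by unfold_locales (use met lie nil lam ric Asub Alie Ader Aself DA Anondeg in auto)
  show ?thesis
    using lie_algebra_sd lie_metric_sd ricci_op_sd pseudo_iwasawa_sd by blast
qed

end
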